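(* Let $N\ge1$, let $z_1^{(1)}>\dots>z_{N-1}^{(1)}>0$ be the zeros of the Laguerre polynomial $L_{N-1}^{(1)}$ (orthogonal w.r.t. $e^{-x}x$ on $]0,\infty[$), and let $r=(r_1,\dots,r_N)\in C_N^D$ with $r_i:=\sqrt{2z_i^{(1)}}$ for $i\le N-1$ and $r_N:=0$. For $k>0$ let $(X_{t,k})_{t\ge0}$ be the Bessel process of type $D_N$ with multiplicity $k$ started in $0$. Define $S=(s_{i,j})_{i,j=1,\dots,N}$ by $$s_{i,i}:=1+2\sum_{l\ne i}(r_i-r_l)^{-2}+2\sum_{l\ne i}(r_i+r_l)^{-2},\qquad s_{i,j}:=2(r_i+r_j)^{-2}-2(r_i-r_j)^{-2}\ (i\ne j).$$ Then $S$ is invertible and, with $\Sigma:=S^{-1}$, for every $t>0$, $$X_{t,k}-\sqrt{kt}\,r\ \longrightarrow\ N(0,t\Sigma)\qquad\text{in distribution as }k\to\infty.$$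
   Context: $C_N^D:=\{x\in\mathbb R^N: x_1\ge\dots\ge x_{N-1}\ge|x_N|\}$. For $k\ge0$, the Bessel process of type $D_N$ with multiplicity $k$ is the diffusion on $C_N^D$ with reflecting boundary and generator $Lf=\frac12\Delta f+k\sum_{i=1}^N\sum_{j\ne i}\big(\frac{1}{x_i-x_j}+\frac{1}{x_i+x_j}\big)\frac{\partial f}{\partial x_i}$; started in $0$, $X_{t,k}$ has density on $C_N^D$ proportional to $e^{-\|y\|^2/(2t)}\prod_{i<j}(y_i^2-y_j^2)^{2k}$. $N(0,t\Sigma)$ is the centered normal distribution with covariance $t\Sigma$. *)

theory Defs
  imports "HOL-Probability.Probability"
begin

text \<open>Vectors in R^N are represented as extensional functions nat => real on the
index set {..<N} (indices 0..N-1 correspond to 1..N of the paper).\<close>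

definition RN :: "nat \<Rightarrow> (nat \<Rightarrow> real) measure" where
  "RN N = PiM {..<N} (\<lambda>_. lborel)"

definition chamberD :: "nat \<Rightarrow> (nat \<Rightarrow> real) set" where
  "chamberD N = {x \<in> PiE {..<N} (\<lambda>_. UNIV).
      (\<forall>i. Suc i < N - 1 \<longrightarrow> x (Suc i) \<le> x i) \<and>
      (2 \<le> N \<longrightarrow> \<bar>x (N - 1)\<bar> \<le> x (N - 2))}"

text \<open>Unnormalized density of X_{t,k} (Bessel process of type D_N, multiplicity k, started in 0).\<close>
definition besselD_dens :: "nat \<Rightarrow> real \<Rightarrow> real \<Rightarrow> (nat \<Rightarrow> real) \<Rightarrow> real" where
  "besselD_dens N k t y =
     indicator (chamberD N) y * exp (- (\<Sum>i<N. (y i)\<^sup>2) / (2 * t)) *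
     (\<Prod>i<N. \<Prod>j\<in>{i<..<N}. ((y i)\<^sup>2 - (y j)\<^sup>2) powr (2 * k))"

definition besselD_law :: "nat \<Rightarrow> real \<Rightarrow> real \<Rightarrow> (nat \<Rightarrow> real) measure" where
  "besselD_law N k t =
     density (RN N) (\<lambda>y. ennreal (besselD_dens N k t y / (\<integral>x. besselD_dens N k t x \<partial>RN N)))"

definition laguerre :: "nat \<Rightarrow> nat \<Rightarrow> real \<Rightarrow> real" where
  "laguerre n a x = (\<Sum>j\<le>n. (-1)^j * real ((n + a) choose (n - j)) * x ^ j / fact j)"

definition is_centered_normal :: "nat \<Rightarrow> (nat \<Rightarrow> nat \<Rightarrow> real) \<Rightarrow> (nat \<Rightarrow> real) measure \<Rightarrow> bool" where
  "is_centered_normal N C \<mu> \<longleftrightarrow>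
     prob_space \<mu> \<and> sets \<mu> = sets (RN N) \<and>
     (\<forall>u. (\<integral>x. cis (\<Sum>i<N. u i * x i) \<partial>\<mu>) =
          complex_of_real (exp (- (\<Sum>i<N. \<Sum>j<N. u i * C i j * u j) / 2)))"

definition conv_distr :: "nat \<Rightarrow> ('b \<Rightarrow> (nat \<Rightarrow> real) measure) \<Rightarrow> (nat \<Rightarrow> real) measure \<Rightarrow> 'b filter \<Rightarrow> bool" where
  "conv_distr N \<mu> \<nu> F \<longleftrightarrow>
     (\<forall>f :: (nat \<Rightarrow> real) \<Rightarrow> real.
        f \<in> borel_measurable (RN N) \<longrightarrow> continuous_on (PiE {..<N} (\<lambda>_. UNIV)) f \<longrightarrow>
        (\<exists>B. \<forall>x\<in>PiE {..<N} (\<lambda>_. UNIV). \<bar>f x\<bar> \<le> B) \<longrightarrow>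
        ((\<lambda>k. \<integral>x. f x \<partial>\<mu> k) \<longlongrightarrow> (\<integral>x. f x \<partial>\<nu>)) F)"

definition is_inverse_mat :: "nat \<Rightarrow> (nat \<Rightarrow> nat \<Rightarrow> real) \<Rightarrow> (nat \<Rightarrow> nat \<Rightarrow> real) \<Rightarrow> bool" where
  "is_inverse_mat N A B \<longleftrightarrow>
     (\<forall>i<N. \<forall>j<N. (\<Sum>l<N. A i l * B l j) = (if i = j then 1 else 0) \<and>
                   (\<Sum>l<N. B i l * A l j) = (if i = j then 1 else 0))"

end

theory Submission
  imports Defs "HOL-Computational_Algebra.Polynomial" "Jordan_Normal_Form.Determinant"
begin

(* The law of X_{t,k} has density proportional to exp (phi_k y) on the Weyl chamber, with
   phi_k y = - |y|^2 / (2 t) + 2 k sum_{i<j} ln (y_i^2 - y_j^2).  Stieltjes' relation for the zeros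
   of L_{N-1}^(1) says precisely that sqrt (k t) r is a critical point of phi_k.  So in
   phi_k (sqrt (k t) r + w) - phi_k (sqrt (k t) r) the linear terms cancel, leaving - |w|^2 / (2 t)
   plus 2 k times remainders ln (1 + x) - x with x of order 1 / sqrt k.  These remainders are
   nonpositive and converge, hence the density ratio tends to exp (- w^T S w / (2 t)) and stays
   below exp (- |w|^2 / (2 t)); dominated convergence makes the centered laws converge to the law
   with density proportional to exp (- w^T S w / (2 t)).  The identity
   w^T S w = |w|^2 + 2 sum_{i<j} ((w_i - w_j)^2 / (r_i - r_j)^2 + (w_i + w_j)^2 / (r_i + r_j)^2)
   shows S >= I, so S is invertible, and completing squares one coordinate at a time identifies
   the characteristic function of the limit as exp (- t u^T S^-1 u / 2). *)

section \<open>Gaussian integrals of quadratic forms\<close>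

definition quad_form :: "nat \<Rightarrow> (nat \<Rightarrow> nat \<Rightarrow> real) \<Rightarrow> (nat \<Rightarrow> real) \<Rightarrow> real" where
  "quad_form n A w = (\<Sum>i<n. \<Sum>j<n. w i * A i j * w j)"

definition mat_vec :: "nat \<Rightarrow> (nat \<Rightarrow> nat \<Rightarrow> real) \<Rightarrow> (nat \<Rightarrow> real) \<Rightarrow> nat \<Rightarrow> real" where
  "mat_vec n A v i = (\<Sum>j<n. A i j * v j)"

definition schur_compl :: "nat \<Rightarrow> (nat \<Rightarrow> nat \<Rightarrow> real) \<Rightarrow> nat \<Rightarrow> nat \<Rightarrow> real" where
  "schur_compl n A i j = A i j - A i n * A n j / A n n"

lemma quad_form_eq_mat_vec: "quad_form n A w = (\<Sum>i<n. w i * mat_vec n A w i)"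
  unfolding quad_form_def mat_vec_def by (simp add: sum_distrib_left mult_ac)

lemma quad_form_divide: "quad_form n (\<lambda>i j. A i j / c) w = quad_form n A w / c"
  unfolding quad_form_def by (simp add: sum_divide_distrib)

lemma quad_form_Suc:
  assumes sym: "\<And>i. i < n \<Longrightarrow> A i n = A n i" and c: "A n n \<noteq> 0"
  shows "quad_form (Suc n) A w
           = quad_form n (schur_compl n A) w + A n n * (w n + (\<Sum>j<n. A n j * w j) / A n n)\<^sup>2"
proof -
  define s where "s = (\<Sum>j<n. A n j * w j)"
  have "quad_form (Suc n) A w
      = quad_form n A w + (\<Sum>i<n. w i * A i n * w n) + (\<Sum>j<n. w n * A n j * w j) + w n * A n n * w n"
    unfolding quad_form_def by (simp add: sum.distrib)
  also have "(\<Sum>i<n. w i * A i n * w n) = w n * s"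
    unfolding s_def sum_distrib_left by (rule sum.cong) (auto simp: sym)
  also have "(\<Sum>j<n. w n * A n j * w j) = w n * s"
    unfolding s_def sum_distrib_left by (rule sum.cong) auto
  finally have expand: "quad_form (Suc n) A w = quad_form n A w + 2 * w n * s + A n n * (w n)\<^sup>2"
    by (simp add: power2_eq_square)
  have "quad_form n (schur_compl n A) w
      = quad_form n A w - (\<Sum>i<n. \<Sum>j<n. w i * (A i n * A n j / A n n) * w j)"
    unfolding quad_form_def schur_compl_def by (simp add: sum_subtractf[symmetric] algebra_simps)
  also have "(\<Sum>i<n. \<Sum>j<n. w i * (A i n * A n j / A n n) * w j) = s\<^sup>2 / A n n"
    unfolding s_def power2_eq_square
    by (simp add: sum_distrib_left sum_distrib_right sum_divide_distrib sym mult_ac)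
  finally have schur: "quad_form n (schur_compl n A) w = quad_form n A w - s\<^sup>2 / A n n" .
  show ?thesis
    using c unfolding expand schur s_def[symmetric] by (simp add: power2_eq_square field_simps)
qed

lemma inner_mat_vec_Suc:
  assumes sym: "\<And>i. i < n \<Longrightarrow> A i n = A n i" and c: "A n n \<noteq> 0"
  shows "(\<Sum>i<Suc n. mat_vec (Suc n) A v i * w i)
           = (\<Sum>i<n. mat_vec n (schur_compl n A) v i * w i)
             + mat_vec (Suc n) A v n * (w n + (\<Sum>j<n. A n j * w j) / A n n)"
proof -
  define s where "s = (\<Sum>j<n. A n j * w j)"
  define b where "b = (\<Sum>j<n. A n j * v j)"
  have "(\<Sum>i<Suc n. mat_vec (Suc n) A v i * w i)
      = (\<Sum>i<n. mat_vec n A v i * w i) + (\<Sum>i<n. A i n * v n * w i) + mat_vec (Suc n) A v n * w n"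
    unfolding mat_vec_def by (simp add: sum.distrib algebra_simps)
  also have "(\<Sum>i<n. A i n * v n * w i) = v n * s"
    unfolding s_def sum_distrib_left by (rule sum.cong) (auto simp: sym)
  finally have expand: "(\<Sum>i<Suc n. mat_vec (Suc n) A v i * w i)
      = (\<Sum>i<n. mat_vec n A v i * w i) + v n * s + mat_vec (Suc n) A v n * w n" .
  have "(\<Sum>i<n. mat_vec n (schur_compl n A) v i * w i)
      = (\<Sum>i<n. mat_vec n A v i * w i) - (\<Sum>i<n. \<Sum>j<n. (A i n * A n j / A n n) * v j * w i)"
    unfolding mat_vec_def schur_compl_def
    by (simp add: sum_subtractf[symmetric] sum_distrib_right left_diff_distrib)
  also have "(\<Sum>i<n. \<Sum>j<n. (A i n * A n j / A n n) * v j * w i) = s * b / A n n"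
    unfolding s_def b_def
    by (simp add: sum_distrib_left sum_distrib_right sum_divide_distrib sym mult_ac)
  finally have schur: "(\<Sum>i<n. mat_vec n (schur_compl n A) v i * w i)
      = (\<Sum>i<n. mat_vec n A v i * w i) - s * b / A n n" .
  have "mat_vec (Suc n) A v n = b + A n n * v n"
    unfolding mat_vec_def b_def by simp
  then show ?thesis
    using c unfolding expand schur s_def[symmetric] by (simp add: field_simps)
qed

lemma coercive_imp_le_diag:
  assumes coercive: "\<And>w. l * (\<Sum>i<Suc n. (w i)\<^sup>2) \<le> quad_form (Suc n) A w"
  shows "l \<le> A n n"
proof -
  define e where "e i = (if i = n then 1 else 0 :: real)" for i
  have "quad_form (Suc n) A e = (\<Sum>i<Suc n. if i = n then A n n else 0)"
    unfolding quad_form_def e_def by (intro sum.cong refl) (auto simp: if_distrib cong: if_cong)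
  moreover have "(\<Sum>i<Suc n. (e i)\<^sup>2) = 1"
    unfolding e_def by (simp add: if_distrib cong: if_cong)
  ultimately show ?thesis
    using coercive[of e] by simp
qed

lemma schur_compl_coercive:
  assumes sym: "\<And>i. i < n \<Longrightarrow> A i n = A n i" and c: "A n n \<noteq> 0" and l: "0 \<le> l"
    and coercive: "\<And>w. l * (\<Sum>i<Suc n. (w i)\<^sup>2) \<le> quad_form (Suc n) A w"
  shows "l * (\<Sum>i<n. (w i)\<^sup>2) \<le> quad_form n (schur_compl n A) w"
proof -
  \<comment> \<open>Choose the last coordinate so that the completed square vanishes.\<close>
  define w' where "w' = w(n := - (\<Sum>j<n. A n j * w j) / A n n)"
  have "(\<Sum>i<n. (w i)\<^sup>2) = (\<Sum>i<n. (w' i)\<^sup>2)"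
    unfolding w'_def by (intro sum.cong) auto
  also have "\<dots> \<le> (\<Sum>i<Suc n. (w' i)\<^sup>2)"
    by simp
  finally have "l * (\<Sum>i<n. (w i)\<^sup>2) \<le> quad_form (Suc n) A w'"
    using coercive[of w'] l by (meson mult_left_mono order_trans)
  also have "quad_form (Suc n) A w'
      = quad_form n (schur_compl n A) w' + A n n * (w' n + (\<Sum>j<n. A n j * w' j) / A n n)\<^sup>2"
    using sym c by (rule quad_form_Suc)
  also have "\<dots> = quad_form n (schur_compl n A) w'"
    using c by (simp add: w'_def)
  also have "\<dots> = quad_form n (schur_compl n A) w"
    unfolding quad_form_def w'_def by (intro sum.cong) auto
  finally show ?thesis .
qed

lemma product_sigma_finite_lborel: "product_sigma_finite (\<lambda>_. lborel :: real measure)"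
  by (simp add: product_sigma_finite_def sigma_finite_lborel)

lemma integrable_exp_sq_norm:
  fixes a :: real and n :: nat
  assumes a: "a > 0"
  shows "integrable (PiM {..<n} (\<lambda>_. lborel)) (\<lambda>w. exp (- a * (\<Sum>i<n. (w i)\<^sup>2) / 2))"
proof -
  define \<sigma> where "\<sigma> = 1 / sqrt a"
  have \<sigma>: "\<sigma> > 0"
    using a by (simp add: \<sigma>_def)
  have "integrable lborel (\<lambda>x. sqrt (2 * pi * \<sigma>\<^sup>2) * normal_density 0 \<sigma> x)"
    using \<sigma> by simp
  also have "(\<lambda>x. sqrt (2 * pi * \<sigma>\<^sup>2) * normal_density 0 \<sigma> x) = (\<lambda>x. exp (- a * x\<^sup>2 / 2))"
    using \<sigma> a by (auto simp: normal_density_def \<sigma>_def power_divide field_simps)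
  finally have "integrable lborel (\<lambda>x. exp (- a * x\<^sup>2 / 2))" .
  then have "integrable (PiM {..<n} (\<lambda>_. lborel)) (\<lambda>w. \<Prod>i<n. exp (- a * (w i)\<^sup>2 / 2))"
    by (intro product_sigma_finite.product_integrable_prod[OF product_sigma_finite_lborel]) auto
  also have "(\<lambda>w. \<Prod>i<n. exp (- a * (w i)\<^sup>2 / 2)) = (\<lambda>w. exp (- a * (\<Sum>i<n. (w i)\<^sup>2) / 2))"
    by (auto simp: exp_sum[symmetric] sum_distrib_left sum_divide_distrib)
  finally show ?thesis .
qed

lemma borel_measurable_cis [measurable]: "cis \<in> borel_measurable borel"
  by (intro borel_measurable_continuous_onI continuous_intros)

lemma quad_form_measurable [measurable]:
  "quad_form n A \<in> borel_measurable (PiM {..<n} (\<lambda>_. lborel))"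
  unfolding quad_form_def by measurable

lemma integrable_exp_quad_form:
  assumes l: "l > 0" and coercive: "\<And>w. l * (\<Sum>i<n. (w i)\<^sup>2) \<le> quad_form n A w"
  shows "integrable (PiM {..<n} (\<lambda>_. lborel)) (\<lambda>w. exp (- quad_form n A w / 2))"
  by (rule Bochner_Integration.integrable_bound[OF integrable_exp_sq_norm[OF l]])
     (use coercive in \<open>auto intro!: AE_I2\<close>)

lemma lborel_integral_cis_gaussian:
  fixes c \<beta> :: real
  assumes c: "c > 0"
  shows "(\<integral>x. cis (\<beta> * x) * complex_of_real (exp (- c * x\<^sup>2 / 2)) \<partial>lborel)
         = complex_of_real (sqrt (2 * pi / c) * exp (- \<beta>\<^sup>2 / (2 * c)))"
proof -
  define s where "s = \<beta> / sqrt c"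
  have sc: "sqrt c > 0"
    using c by simp
  have "complex_of_real (exp (- s\<^sup>2 / 2)) = char std_normal_distribution s"
    by (simp add: char_std_normal_distribution)
  also have "\<dots> = (\<integral>y. complex_of_real (std_normal_density y) * iexp (s * y) \<partial>lborel)"
    unfolding char_def by (subst integral_density) (auto simp: normal_density_nonneg scaleR_conv_of_real)
  also have "\<dots> = complex_of_real (sqrt c) * (\<integral>x. complex_of_real (std_normal_density (0 + sqrt c * x))
                      * iexp (s * (0 + sqrt c * x)) \<partial>lborel)"
    using sc by (subst lborel_integral_real_affine[where c = "sqrt c" and t = 0])
      (auto simp: scaleR_conv_of_real)
  also have "(\<lambda>x. complex_of_real (std_normal_density (0 + sqrt c * x)) * iexp (s * (0 + sqrt c * x)))
      = (\<lambda>x. complex_of_real (1 / sqrt (2 * pi)) * (cis (\<beta> * x) * complex_of_real (exp (- c * x\<^sup>2 / 2))))"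
    using sc by (auto simp: std_normal_density_def s_def cis_conv_exp power_mult_distrib mult_ac)
  finally have "complex_of_real (exp (- s\<^sup>2 / 2)) = complex_of_real (sqrt c / sqrt (2 * pi))
      * (\<integral>x. cis (\<beta> * x) * complex_of_real (exp (- c * x\<^sup>2 / 2)) \<partial>lborel)"
    by simp
  then have "(\<integral>x. cis (\<beta> * x) * complex_of_real (exp (- c * x\<^sup>2 / 2)) \<partial>lborel)
      = complex_of_real (sqrt (2 * pi) / sqrt c) * complex_of_real (exp (- s\<^sup>2 / 2))"
    using sc by (simp add: field_simps)
  also have "\<dots> = complex_of_real (sqrt (2 * pi / c) * exp (- \<beta>\<^sup>2 / (2 * c)))"
    using c by (simp add: s_def real_sqrt_divide power_divide)
  finally show ?thesis .
qed

definition gaussian_integrand :: "nat \<Rightarrow> (nat \<Rightarrow> nat \<Rightarrow> real) \<Rightarrow> (nat \<Rightarrow> real) \<Rightarrow> (nat \<Rightarrow> real) \<Rightarrow> complex" where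
  "gaussian_integrand n A v w = cis (\<Sum>i<n. mat_vec n A v i * w i) * complex_of_real (exp (- quad_form n A w / 2))"

lemma gaussian_integrand_measurable [measurable]:
  "gaussian_integrand n A v \<in> borel_measurable (PiM {..<n} (\<lambda>_. lborel))"
  unfolding gaussian_integrand_def by measurable

lemma integrable_gaussian_integrand:
  assumes "l > 0" and "\<And>w. l * (\<Sum>i<n. (w i)\<^sup>2) \<le> quad_form n A w"
  shows "integrable (PiM {..<n} (\<lambda>_. lborel)) (gaussian_integrand n A v)"
  by (rule Bochner_Integration.integrable_bound[OF integrable_exp_quad_form[OF assms]])
     (auto intro!: AE_I2 simp: gaussian_integrand_def norm_mult)

lemma gaussian_integrand_upd:
  fixes x :: "nat \<Rightarrow> real"
  assumes sym: "\<And>i. i < n \<Longrightarrow> A i n = A n i" and c: "A n n \<noteq> 0"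
  defines "m \<equiv> (\<Sum>j<n. A n j * x j) / A n n"
  shows "gaussian_integrand (Suc n) A v (x(n := y))
           = gaussian_integrand n (schur_compl n A) v x
             * (cis (mat_vec (Suc n) A v n * (m + y)) * complex_of_real (exp (- A n n * (m + y)\<^sup>2 / 2)))"
proof -
  have upd: "(\<Sum>j<n. f j * (x(n := y)) j) = (\<Sum>j<n. f j * x j)" for f
    by (intro sum.cong) auto
  have "quad_form n B (x(n := y)) = quad_form n B x" for B
    unfolding quad_form_def by (intro sum.cong) auto
  then have "quad_form (Suc n) A (x(n := y)) = quad_form n (schur_compl n A) x + A n n * (m + y)\<^sup>2"
    using quad_form_Suc[where n = n and A = A, OF sym c, of "x(n := y)"] unfolding upd by (simp add: m_def add.commute)
  moreover have "(\<Sum>i<Suc n. mat_vec (Suc n) A v i * (x(n := y)) i)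
      = (\<Sum>i<n. mat_vec n (schur_compl n A) v i * x i) + mat_vec (Suc n) A v n * (m + y)"
    using inner_mat_vec_Suc[where n = n and A = A, OF sym c, of v "x(n := y)"] unfolding upd by (simp add: m_def add.commute)
  moreover have "exp (- (quad_form n (schur_compl n A) x + A n n * (m + y)\<^sup>2) / 2)
      = exp (- quad_form n (schur_compl n A) x / 2) * exp (- A n n * (m + y)\<^sup>2 / 2)"
    by (simp add: exp_add[symmetric] field_simps)
  ultimately show ?thesis
    unfolding gaussian_integrand_def by (simp add: cis_mult[symmetric] mult_ac)
qed

lemma quad_form_Suc_mat_vec:
  assumes sym: "\<And>i. i < n \<Longrightarrow> A i n = A n i" and c: "A n n \<noteq> 0"
  shows "quad_form (Suc n) A v = quad_form n (schur_compl n A) v + (mat_vec (Suc n) A v n)\<^sup>2 / A n n"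
proof -
  have "quad_form (Suc n) A v
      = quad_form n (schur_compl n A) v + A n n * (v n + (\<Sum>j<n. A n j * v j) / A n n)\<^sup>2"
    using sym c by (rule quad_form_Suc)
  moreover have "mat_vec (Suc n) A v n = A n n * (v n + (\<Sum>j<n. A n j * v j) / A n n)"
    using c unfolding mat_vec_def by (simp add: field_simps)
  ultimately show ?thesis
    using c by (simp add: power2_eq_square)
qed

lemma integral_gaussian_integrand_Suc:
  assumes sym: "\<And>i. i < n \<Longrightarrow> A i n = A n i" and c: "A n n > 0"
    and l: "l > 0" and coercive: "\<And>w. l * (\<Sum>i<Suc n. (w i)\<^sup>2) \<le> quad_form (Suc n) A w"
  shows "(\<integral>w. gaussian_integrand (Suc n) A v w \<partial>PiM {..<Suc n} (\<lambda>_. lborel))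
           = (\<integral>x. gaussian_integrand n (schur_compl n A) v x \<partial>PiM {..<n} (\<lambda>_. lborel))
             * complex_of_real (sqrt (2 * pi / A n n) * exp (- (mat_vec (Suc n) A v n)\<^sup>2 / (2 * A n n)))"
    (is "_ = _ * ?K")
proof -
  define H where "H y = cis (mat_vec (Suc n) A v n * y) * complex_of_real (exp (- A n n * y\<^sup>2 / 2))" for y
  have "integrable (PiM (insert n {..<n}) (\<lambda>_. lborel)) (gaussian_integrand (Suc n) A v)"
    using integrable_gaussian_integrand[OF l coercive] by (simp add: lessThan_Suc)
  then have "(\<integral>w. gaussian_integrand (Suc n) A v w \<partial>PiM {..<Suc n} (\<lambda>_. lborel))
      = (\<integral>x. (\<integral>y. gaussian_integrand (Suc n) A v (x(n := y)) \<partial>lborel) \<partial>PiM {..<n} (\<lambda>_. lborel))"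
    unfolding lessThan_Suc
    by (intro product_sigma_finite.product_integral_insert[OF product_sigma_finite_lborel]) auto
  also have "\<dots> = (\<integral>x. gaussian_integrand n (schur_compl n A) v x * ?K \<partial>PiM {..<n} (\<lambda>_. lborel))"
  proof (rule Bochner_Integration.integral_cong[OF refl])
    fix x
    define m where "m = (\<Sum>j<n. A n j * x j) / A n n"
    have "gaussian_integrand (Suc n) A v (x(n := y)) = gaussian_integrand n (schur_compl n A) v x * H (m + y)"
      for y
      using gaussian_integrand_upd[where n = n and A = A and x = x and v = v and y = y, OF sym]
      unfolding H_def m_def using c by simp
    then have "(\<integral>y. gaussian_integrand (Suc n) A v (x(n := y)) \<partial>lborel)
        = gaussian_integrand n (schur_compl n A) v x * (\<integral>y. H (m + y) \<partial>lborel)"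
      by simp
    also have "(\<integral>y. H (m + y) \<partial>lborel) = (\<integral>y. H y \<partial>lborel)"
      using lborel_integral_real_affine[of 1 H m] by simp
    also have "\<dots> = ?K"
      unfolding H_def by (rule lborel_integral_cis_gaussian[OF c])
    finally show "(\<integral>y. gaussian_integrand (Suc n) A v (x(n := y)) \<partial>lborel)
        = gaussian_integrand n (schur_compl n A) v x * ?K" .
  qed
  finally show ?thesis
    by simp
qed

text \<open>Taking the frequency of the form \<open>A v\<close> avoids inverting \<open>A\<close>: completing the square in
  the last coordinate splits off a one-dimensional Gaussian and leaves the Schur complement.\<close>

lemma gaussian_char_integral:
  fixes n :: nat
  assumes "\<And>i j. i < n \<Longrightarrow> j < n \<Longrightarrow> A i j = A j i" and "l > 0"
    and "\<And>w. l * (\<Sum>i<n. (w i)\<^sup>2) \<le> quad_form n A w"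
  shows "\<exists>C>0. \<forall>v. (\<integral>w. gaussian_integrand n A v w \<partial>PiM {..<n} (\<lambda>_. lborel))
                    = complex_of_real (C * exp (- quad_form n A v / 2))"
  using assms
proof (induction n arbitrary: A)
  case 0
  then show ?case
    by (intro exI[of _ 1]) (simp add: gaussian_integrand_def quad_form_def mat_vec_def PiM_empty)
next
  case (Suc n)
  note l = Suc.prems(2) and coercive = Suc.prems(3)
  define c where "c = A n n"
  have c: "c > 0"
    using coercive_imp_le_diag[OF coercive] l by (simp add: c_def)
  have sym: "\<And>i. i < n \<Longrightarrow> A i n = A n i"
    using Suc.prems(1) by simp
  have cne: "A n n \<noteq> 0"
    using c unfolding c_def by linarith
  have "\<exists>C>0. \<forall>v. (\<integral>x. gaussian_integrand n (schur_compl n A) v x \<partial>PiM {..<n} (\<lambda>_. lborel))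
                    = complex_of_real (C * exp (- quad_form n (schur_compl n A) v / 2))"
  proof (rule Suc.IH)
    show "schur_compl n A i j = schur_compl n A j i" if "i < n" "j < n" for i j
      using Suc.prems(1) that unfolding schur_compl_def by (simp add: mult.commute)
    show "l * (\<Sum>i<n. (w i)\<^sup>2) \<le> quad_form n (schur_compl n A) w" for w
      by (rule schur_compl_coercive[OF sym cne less_imp_le[OF l] coercive])
  qed (rule l)
  then obtain C where C: "C > 0"
    and IH: "\<And>v. (\<integral>x. gaussian_integrand n (schur_compl n A) v x \<partial>PiM {..<n} (\<lambda>_. lborel))
                    = complex_of_real (C * exp (- quad_form n (schur_compl n A) v / 2))"
    by blast
  show ?case
  proof (intro exI[of _ "sqrt (2 * pi / c) * C"] conjI allI)
    show "sqrt (2 * pi / c) * C > 0"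
      using c C by simp
    fix v
    have "quad_form (Suc n) A v = quad_form n (schur_compl n A) v + (mat_vec (Suc n) A v n)\<^sup>2 / c"
      unfolding c_def using sym cne by (rule quad_form_Suc_mat_vec)
    then have exp_split: "exp (- quad_form n (schur_compl n A) v / 2) * exp (- (mat_vec (Suc n) A v n)\<^sup>2 / (2 * c))
        = exp (- quad_form (Suc n) A v / 2)"
      by (simp add: exp_add[symmetric] field_simps)
    have "(\<integral>w. gaussian_integrand (Suc n) A v w \<partial>PiM {..<Suc n} (\<lambda>_. lborel))
        = (\<integral>x. gaussian_integrand n (schur_compl n A) v x \<partial>PiM {..<n} (\<lambda>_. lborel))
          * complex_of_real (sqrt (2 * pi / c) * exp (- (mat_vec (Suc n) A v n)\<^sup>2 / (2 * c)))"
      unfolding c_def using sym c[unfolded c_def] l coercive by (rule integral_gaussian_integrand_Suc)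
    then show "(\<integral>w. gaussian_integrand (Suc n) A v w \<partial>PiM {..<Suc n} (\<lambda>_. lborel))
        = complex_of_real (sqrt (2 * pi / c) * C * exp (- quad_form (Suc n) A v / 2))"
      unfolding IH exp_split[symmetric] by (simp flip: of_real_mult add: mult_ac)
  qed
qed

lemma ex_inverse_mat_if_kernel_trivial:
  fixes A :: "nat \<Rightarrow> nat \<Rightarrow> real"
  assumes kernel: "\<And>w. \<forall>i<N. mat_vec N A w i = 0 \<Longrightarrow> \<forall>i<N. w i = 0"
  shows "\<exists>B. is_inverse_mat N A B"
proof -
  define M where "M = mat N N (\<lambda>(i, j). A i j)"
  have M: "M \<in> carrier_mat N N"
    unfolding M_def by simp
  have "Determinant.det M \<noteq> 0"
  proof
    assume "Determinant.det M = 0"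
    then obtain v where v: "v \<in> carrier_vec N" "v \<noteq> 0\<^sub>v N" "M *\<^sub>v v = 0\<^sub>v N"
      using det_0_iff_vec_prod_zero[OF M] by auto
    define w where "w i = (if i < N then v $ i else 0)" for i
    have "mat_vec N A w i = (M *\<^sub>v v) $ i" if "i < N" for i
      using that v(1) unfolding M_def w_def mat_vec_def
      by (simp add: mult_mat_vec_def scalar_prod_def row_def atLeast0LessThan)
    then have "\<forall>i<N. mat_vec N A w i = 0"
      using v(3) by simp
    then have "\<forall>i<N. w i = 0"
      by (rule kernel)
    then have "v = 0\<^sub>v N"
      using v(1) unfolding w_def by (auto intro!: eq_vecI)
    with v(2) show False
      by simp
  qed
  then obtain B where B: "B \<in> carrier_mat N N" "B * M = 1\<^sub>m N" "M * B = 1\<^sub>m N"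
    using det_non_zero_imp_unit[OF M, of undefined] by (auto simp: Units_def ring_mat_def)
  have "(\<Sum>l<N. A i l * B $$ (l, j)) = (M * B) $$ (i, j)" "(\<Sum>l<N. B $$ (i, l) * A l j) = (B * M) $$ (i, j)"
    if "i < N" "j < N" for i j
    using that M B(1) unfolding M_def
    by (simp_all add: times_mat_def scalar_prod_def row_def col_def atLeast0LessThan)
  then have "is_inverse_mat N A (\<lambda>i j. B $$ (i, j))"
    unfolding is_inverse_mat_def using B(2,3) by simp
  then show ?thesis
    by blast
qed

lemma ex_inverse_mat_if_coercive:
  fixes A :: "nat \<Rightarrow> nat \<Rightarrow> real"
  assumes l: "l > 0" and coercive: "\<And>w. l * (\<Sum>i<N. (w i)\<^sup>2) \<le> quad_form N A w"
  shows "\<exists>B. is_inverse_mat N A B"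
proof (rule ex_inverse_mat_if_kernel_trivial)
  fix w assume "\<forall>i<N. mat_vec N A w i = 0"
  then have "quad_form N A w = 0"
    unfolding quad_form_eq_mat_vec by simp
  then have "(\<Sum>i<N. (w i)\<^sup>2) \<le> 0"
    using coercive[of w] l by (simp add: mult_le_0_iff)
  then have "(\<Sum>i<N. (w i)\<^sup>2) = 0"
    using sum_nonneg[of "{..<N}" "\<lambda>i. (w i)\<^sup>2"] by simp
  then show "\<forall>i<N. w i = 0"
    by (simp add: sum_nonneg_eq_0_iff)
qed

lemma is_inverse_mat_cong:
  assumes "is_inverse_mat N A B" and "\<And>i j. i < N \<Longrightarrow> j < N \<Longrightarrow> A i j = A' i j"
  shows "is_inverse_mat N A' B"
proof -
  have "(\<Sum>l<N. A i l * B l j) = (\<Sum>l<N. A' i l * B l j)" "(\<Sum>l<N. B i l * A l j) = (\<Sum>l<N. B i l * A' l j)"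
    if "i < N" "j < N" for i j
    using that assms(2) by (auto intro!: sum.cong)
  with assms(1) show ?thesis
    unfolding is_inverse_mat_def by simp
qed

lemma mat_vec_scaled_inverse:
  assumes inv: "is_inverse_mat N A B" and t: "t \<noteq> 0" and i: "i < N"
  shows "mat_vec N (\<lambda>i j. A i j / t) (\<lambda>i. t * (\<Sum>j<N. B i j * u j)) i = u i"
proof -
  have "mat_vec N (\<lambda>i j. A i j / t) (\<lambda>i. t * (\<Sum>j<N. B i j * u j)) i = (\<Sum>l<N. (\<Sum>j<N. A i j * B j l) * u l)"
    unfolding mat_vec_def using t by (simp add: sum_distrib_left sum_distrib_right mult_ac) (rule sum.swap)
  also have "\<dots> = (\<Sum>l<N. if l = i then u l else 0)"
    using inv i unfolding is_inverse_mat_def by (intro sum.cong refl) auto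
  also have "\<dots> = u i"
    using i by simp
  finally show ?thesis .
qed

section \<open>Zeros of Laguerre polynomials\<close>

definition laguerre_coeff :: "nat \<Rightarrow> nat \<Rightarrow> nat \<Rightarrow> real" where
  "laguerre_coeff n a j = (-1)^j * real ((n + a) choose (n - j)) / fact j"

definition laguerre_poly :: "nat \<Rightarrow> nat \<Rightarrow> real poly" where
  "laguerre_poly n a = (\<Sum>j\<le>n. monom (laguerre_coeff n a j) j)"

lemma poly_laguerre_poly: "poly (laguerre_poly n a) x = laguerre n a x"
  unfolding laguerre_poly_def laguerre_def laguerre_coeff_def by (simp add: poly_sum poly_monom)

lemma laguerre_coeff_Suc:
  assumes "k < n"
  shows "real (k + 1) * real (k + 1 + a) * laguerre_coeff n a (k + 1) = - (real (n - k) * laguerre_coeff n a k)"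
proof -
  define q where "q = n - k - 1"
  have nk: "n - k = q + 1" "n - (k + 1) = q"
    using assms by (auto simp: q_def)
  have "(q + 1) * ((n + a) choose (q + 1)) = (n + a) * ((n + a - 1) choose q)"
    using binomial_absorption[of q "n + a"] by simp
  also have "\<dots> = (n + a - q) * ((n + a) choose q)"
    by (rule binomial_absorb_comp[symmetric])
  also have "n + a - q = k + 1 + a"
    using assms by (simp add: q_def)
  finally have binom: "real (k + 1 + a) * real ((n + a) choose q) = real (q + 1) * real ((n + a) choose (q + 1))"
    by (metis of_nat_mult)
  have "real (k + 1) * real (k + 1 + a) * laguerre_coeff n a (k + 1)
      = - ((-1)^k * (real (k + 1 + a) * real ((n + a) choose q)) / fact k)"
    unfolding laguerre_coeff_def nk by (simp add: fact_Suc field_simps del: of_nat_add of_nat_Suc)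
  also have "\<dots> = - (real (n - k) * laguerre_coeff n a k)"
    unfolding binom laguerre_coeff_def nk by (simp add: field_simps)
  finally show ?thesis .
qed

lemma laguerre_ode:
  fixes n a :: nat and x :: real
  defines "p \<equiv> laguerre_poly n a"
  shows "x * poly (pderiv (pderiv p)) x + (real a + 1 - x) * poly (pderiv p) x + real n * poly p x = 0"
proof -
  let ?c = "laguerre_coeff n a"
  have pderiv_sum: "pderiv (sum f A) = (\<Sum>x\<in>A. pderiv (f x))" for f :: "nat \<Rightarrow> real poly" and A
    using higher_pderiv_sum[of 1 f A] by simp
  have p: "poly p x = (\<Sum>j\<le>n. ?c j * x ^ j)"
    and p': "poly (pderiv p) x = (\<Sum>j\<le>n. real j * ?c j * x ^ (j - 1))"
    and p'': "poly (pderiv (pderiv p)) x = (\<Sum>j\<le>n. real (j - 1) * (real j * ?c j) * x ^ (j - 1 - 1))"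
    unfolding p_def laguerre_poly_def pderiv_sum by (simp_all add: pderiv_monom poly_sum poly_monom)
  have "x * poly (pderiv (pderiv p)) x + (real a + 1) * poly (pderiv p) x
      = (\<Sum>j\<le>n. real j * real (j + a) * ?c j * x ^ (j - 1))"
    unfolding p' p'' sum_distrib_left sum.distrib[symmetric]
  proof (rule sum.cong[OF refl])
    fix j
    show "x * (real (j - 1) * (real j * ?c j) * x ^ (j - 1 - 1)) + (real a + 1) * (real j * ?c j * x ^ (j - 1))
        = real j * real (j + a) * ?c j * x ^ (j - 1)"
      by (cases j; cases "j - 1") (simp_all add: field_simps)
  qed
  also have "\<dots> = (\<Sum>k<n. real (k + 1) * real (k + 1 + a) * ?c (k + 1) * x ^ k)"
  proof (cases n)
    case (Suc m)
    show ?thesis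
      unfolding Suc sum.atMost_Suc_shift by (simp add: lessThan_Suc_atMost ac_simps)
  qed simp
  finally have high: "x * poly (pderiv (pderiv p)) x + (real a + 1) * poly (pderiv p) x
      = (\<Sum>k<n. real (k + 1) * real (k + 1 + a) * ?c (k + 1) * x ^ k)" .
  have "- x * poly (pderiv p) x + real n * poly p x = (\<Sum>j\<le>n. real (n - j) * ?c j * x ^ j)"
    unfolding p' p sum_distrib_left sum.distrib[symmetric]
    by (rule sum.cong[OF refl]) (auto simp: of_nat_diff field_simps elim!: less_SucE dest!: gr0_implies_Suc
        split: nat.splits)
  also have "\<dots> = (\<Sum>k<n. real (n - k) * ?c k * x ^ k)"
    unfolding lessThan_Suc_atMost[symmetric] by simp
  finally have low: "- x * poly (pderiv p) x + real n * poly p x = (\<Sum>k<n. real (n - k) * ?c k * x ^ k)" .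
  have "x * poly (pderiv (pderiv p)) x + (real a + 1 - x) * poly (pderiv p) x + real n * poly p x
      = (x * poly (pderiv (pderiv p)) x + (real a + 1) * poly (pderiv p) x)
        + (- x * poly (pderiv p) x + real n * poly p x)"
    by (simp add: algebra_simps)
  also have "\<dots> = (\<Sum>k<n. (real (k + 1) * real (k + 1 + a) * ?c (k + 1) + real (n - k) * ?c k) * x ^ k)"
    unfolding high low by (simp only: sum.distrib[symmetric] distrib_right)
  also have "\<dots> = 0"
    by (intro sum.neutral ballI) (simp only: laguerre_coeff_Suc lessThan_iff add.left_inverse mult_zero_left)
  finally show ?thesis .
qed

lemma laguerre_poly_eq_prod_zeros:
  fixes z :: "nat \<Rightarrow> real"
  assumes inj: "inj_on z {..<n}" and zeros: "\<And>l. l < n \<Longrightarrow> laguerre n a (z l) = 0"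
  shows "laguerre_poly n a = Polynomial.smult (laguerre_coeff n a n) (\<Prod>l<n. [:- z l, 1:])"
proof (rule poly_eqI_degree_lead_coeff[where n = n and A = "z ` {..<n}"])
  have deg: "degree (\<Prod>l<n. [:- z l, 1:]) = n"
    by (subst degree_prod_eq_sum_degree) auto
  have "coeff (laguerre_poly n a) n = laguerre_coeff n a n"
    unfolding laguerre_poly_def coeff_sum coeff_monom by simp
  moreover have "lead_coeff (\<Prod>l<n. [:- z l, 1:]) = 1"
    unfolding lead_coeff_prod by simp
  ultimately show "coeff (laguerre_poly n a) n = coeff (Polynomial.smult (laguerre_coeff n a n) (\<Prod>l<n. [:- z l, 1:])) n"
    using deg by simp
  show "n \<le> card (z ` {..<n})"
    using card_image[OF inj] by simp
  show "degree (laguerre_poly n a) \<le> n"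
    unfolding laguerre_poly_def by (intro degree_sum_le) (auto intro: order.trans[OF degree_monom_le])
  show "degree (Polynomial.smult (laguerre_coeff n a n) (\<Prod>l<n. [:- z l, 1:])) \<le> n"
    using deg by simp
  fix x assume "x \<in> z ` {..<n}"
  then obtain l where l: "l < n" "x = z l"
    by auto
  then have "poly (\<Prod>l<n. [:- z l, 1:]) x = 0"
    unfolding poly_prod by (auto intro: prod_zero)
  then show "poly (laguerre_poly n a) x = poly (Polynomial.smult (laguerre_coeff n a n) (\<Prod>l<n. [:- z l, 1:])) x"
    using zeros l by (simp add: poly_laguerre_poly)
qed

text \<open>Evaluating the Laguerre differential equation at a simple zero \<open>z\<^sub>i\<close>, where
  \<open>p''(z\<^sub>i) / p'(z\<^sub>i) = 2 \<Sum>\<^sub>l\<^sub>\<noteq>\<^sub>i 1 / (z\<^sub>i - z\<^sub>l)\<close>, gives Stieltjes' relation.\<close>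

lemma laguerre_zeros_stieltjes:
  fixes z :: "nat \<Rightarrow> real"
  assumes inj: "inj_on z {..<n}" and zeros: "\<And>l. l < n \<Longrightarrow> laguerre n a (z l) = 0"
    and i: "i < n" and zi: "z i \<noteq> 0"
  shows "(\<Sum>l\<in>{..<n} - {i}. 1 / (z i - z l)) = (z i - real a - 1) / (2 * z i)"
proof -
  define P where "P = (\<Prod>l<n. [:- z l, 1:])"
  define c where "c = laguerre_coeff n a n"
  have c: "c \<noteq> 0"
    unfolding c_def laguerre_coeff_def by simp
  have factor: "laguerre_poly n a = Polynomial.smult c P"
    unfolding P_def c_def using inj zeros by (rule laguerre_poly_eq_prod_zeros)
  define L where "L = {..<n} - {i}"
  define Q where "Q = (\<Prod>l\<in>L. [:- z l, 1:])"
  have PQ: "P = [:- z i, 1:] * Q"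
    unfolding P_def Q_def L_def using i by (subst prod.remove[of _ i]) auto
  have P': "pderiv P = Q + [:- z i, 1:] * pderiv Q"
    unfolding PQ pderiv_mult by (simp add: pderiv_pCons)
  have P'': "pderiv (pderiv P) = 2 * pderiv Q + [:- z i, 1:] * pderiv (pderiv Q)"
    unfolding P' pderiv_add pderiv_mult by (simp add: pderiv_pCons algebra_simps mult_2)
  have dist: "z i - z l \<noteq> 0" if "l \<in> L" for l
    using that inj i unfolding L_def by (auto dest: inj_onD)
  have Q: "poly Q (z i) = (\<Prod>l\<in>L. z i - z l)"
    unfolding Q_def poly_prod by simp
  then have Q0: "poly Q (z i) \<noteq> 0"
    using dist by (simp add: L_def)
  have "poly (pderiv Q) (z i) = (\<Sum>m\<in>L. \<Prod>l\<in>L - {m}. z i - z l)"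
    unfolding Q_def pderiv_prod poly_sum by (simp add: poly_prod pderiv_pCons)
  also have "\<dots> = (\<Sum>m\<in>L. poly Q (z i) / (z i - z m))"
    unfolding Q by (intro sum.cong refl) (use dist in \<open>simp add: prod_diff1 L_def\<close>)
  finally have Q': "poly (pderiv Q) (z i) = poly Q (z i) * (\<Sum>l\<in>L. 1 / (z i - z l))"
    by (simp add: sum_distrib_left)
  have "z i * poly (pderiv (pderiv (laguerre_poly n a))) (z i)
        + (real a + 1 - z i) * poly (pderiv (laguerre_poly n a)) (z i)
        + real n * poly (laguerre_poly n a) (z i) = 0"
    by (rule laguerre_ode)
  moreover have "poly (laguerre_poly n a) (z i) = 0"
    using zeros i by (simp add: poly_laguerre_poly)
  moreover have "poly (pderiv (laguerre_poly n a)) (z i) = c * poly Q (z i)"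
    unfolding factor pderiv_smult P' by simp
  moreover have "poly (pderiv (pderiv (laguerre_poly n a))) (z i) = c * (2 * poly (pderiv Q) (z i))"
    unfolding factor pderiv_smult P'' by simp
  ultimately have "c * poly Q (z i) * (2 * z i * (\<Sum>l\<in>L. 1 / (z i - z l)) + (real a + 1 - z i)) = 0"
    unfolding Q' by (simp add: algebra_simps)
  then have "2 * z i * (\<Sum>l\<in>L. 1 / (z i - z l)) + (real a + 1 - z i) = 0"
    using c Q0 by simp
  then show ?thesis
    using zi unfolding L_def by (simp add: field_simps)
qed

section \<open>The mode of the type D density\<close>

definition pair_sum :: "nat \<Rightarrow> (nat \<Rightarrow> nat \<Rightarrow> 'a::comm_monoid_add) \<Rightarrow> 'a" where
  "pair_sum N g = (\<Sum>i<N. \<Sum>j\<in>{i<..<N}. g i j)"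

lemma offdiag_sum_eq_pair_sum:
  fixes N :: nat
  shows "(\<Sum>i<N. \<Sum>j\<in>{..<N} - {i}. g i j) = pair_sum N (\<lambda>i j. g i j + g j i)"
proof -
  have lower: "(\<Sum>i<N. \<Sum>j\<in>{j\<in>{..<N}. j < i}. g i j) = (\<Sum>j<N. \<Sum>i\<in>{j<..<N}. g i j)"
  proof -
    have "(\<Sum>i<N. \<Sum>j\<in>{j\<in>{..<N}. j < i}. g i j) = (\<Sum>j<N. \<Sum>i\<in>{i\<in>{..<N}. j < i}. g i j)"
      by (rule sum.swap_restrict) simp_all
    also have "\<dots> = (\<Sum>j<N. \<Sum>i\<in>{j<..<N}. g i j)"
      by (intro sum.cong) auto
    finally show ?thesis .
  qed
  have "(\<Sum>i<N. \<Sum>j\<in>{..<N} - {i}. g i j) = (\<Sum>i<N. (\<Sum>j\<in>{i<..<N}. g i j) + (\<Sum>j\<in>{j\<in>{..<N}. j < i}. g i j))"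
  proof (rule sum.cong[OF refl])
    fix i assume "i \<in> {..<N}"
    then have "{..<N} - {i} = {i<..<N} \<union> {j\<in>{..<N}. j < i}" "{i<..<N} \<inter> {j\<in>{..<N}. j < i} = {}"
      by auto
    then show "(\<Sum>j\<in>{..<N} - {i}. g i j) = (\<Sum>j\<in>{i<..<N}. g i j) + (\<Sum>j\<in>{j\<in>{..<N}. j < i}. g i j)"
      by (simp add: sum.union_disjoint)
  qed
  then show ?thesis
    unfolding pair_sum_def sum.distrib lower by (simp add: sum.distrib)
qed

lemma pair_sum_add: "pair_sum N (\<lambda>i j. f i j + g i j) = pair_sum N f + pair_sum N g"
  unfolding pair_sum_def by (simp add: sum.distrib)

lemma pair_sum_cmult: "pair_sum N (\<lambda>i j. c * f i j) = c * pair_sum N (f :: _ \<Rightarrow> _ \<Rightarrow> 'a::semiring_0)"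
  unfolding pair_sum_def by (simp add: sum_distrib_left)

lemma pair_sum_divide: "pair_sum N (\<lambda>i j. f i j / c) = pair_sum N f / (c :: 'a::field)"
  unfolding pair_sum_def by (simp add: sum_divide_distrib)

lemma pair_sum_cong: "(\<And>i j. i < j \<Longrightarrow> j < N \<Longrightarrow> f i j = g i j) \<Longrightarrow> pair_sum N f = pair_sum N g"
  unfolding pair_sum_def by (intro sum.cong refl) auto

lemma pair_sum_nonneg:
  "(\<And>i j. i < j \<Longrightarrow> j < N \<Longrightarrow> 0 \<le> f i j) \<Longrightarrow> 0 \<le> pair_sum N (f :: _ \<Rightarrow> _ \<Rightarrow> 'a::ordered_comm_monoid_add)"
  unfolding pair_sum_def by (intro sum_nonneg) auto

lemma pair_sum_nonpos:
  "(\<And>i j. i < j \<Longrightarrow> j < N \<Longrightarrow> f i j \<le> 0) \<Longrightarrow> pair_sum N (f :: _ \<Rightarrow> _ \<Rightarrow> 'a::ordered_comm_monoid_add) \<le> 0"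
  unfolding pair_sum_def by (intro sum_nonpos) auto

lemma tendsto_pair_sum:
  fixes f :: "'b \<Rightarrow> nat \<Rightarrow> nat \<Rightarrow> 'a::topological_comm_monoid_add"
  shows "(\<And>i j. i < j \<Longrightarrow> j < N \<Longrightarrow> ((\<lambda>k. f k i j) \<longlongrightarrow> l i j) F)
           \<Longrightarrow> ((\<lambda>k. pair_sum N (f k)) \<longlongrightarrow> pair_sum N l) F"
  unfolding pair_sum_def by (intro tendsto_sum) auto

definition open_chamberD :: "nat \<Rightarrow> (nat \<Rightarrow> real) \<Rightarrow> bool" where
  "open_chamberD N y \<longleftrightarrow> (\<forall>i j. i < j \<longrightarrow> j < N \<longrightarrow> \<bar>y j\<bar> < y i)"

lemma open_chamberD_pos:
  assumes "open_chamberD N y" "i < j" "j < N"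
  shows "0 < y i - y j" "0 < y i + y j"
  using assms unfolding open_chamberD_def by fastforce+

lemma open_chamberD_iff: "open_chamberD N y \<longleftrightarrow> (\<forall>i j. i < j \<longrightarrow> j < N \<longrightarrow> 0 < y i - y j \<and> 0 < y i + y j)"
proof -
  have "\<bar>b\<bar> < a \<longleftrightarrow> 0 < a - b \<and> 0 < a + b" for a b :: real
    by auto
  then show ?thesis
    unfolding open_chamberD_def by simp
qed

text \<open>The critical-point equation says that \<open>\<surd>(k t) r\<close> is a critical point of the log-density
  \<open>- |y|\<^sup>2 / (2 t) + 2 k \<Sum>\<^sub>i\<^sub><\<^sub>j ln (y\<^sub>i\<^sup>2 - y\<^sub>j\<^sup>2)\<close> of \<open>X\<^sub>t\<^sub>,\<^sub>k\<close>, for all \<open>k\<close> and \<open>t\<close>.\<close>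

locale typeD_mode =
  fixes N :: nat and r :: "nat \<Rightarrow> real"
  assumes open_chamber: "open_chamberD N r"
    and critical: "\<And>i. i < N \<Longrightarrow> r i = 2 * (\<Sum>l\<in>{..<N} - {i}. 1 / (r i - r l) + 1 / (r i + r l))"
begin

lemma r_diff_pos: "i < j \<Longrightarrow> j < N \<Longrightarrow> 0 < r i - r j"
  and r_add_pos: "i < j \<Longrightarrow> j < N \<Longrightarrow> 0 < r i + r j"
  using open_chamberD_pos[OF open_chamber] by auto

text \<open>\<open>hess\<close> is \<open>- t\<close> times the Hessian of the log-density at its critical point \<open>\<surd>(k t) r\<close>;
  it does not depend on \<open>k\<close> or \<open>t\<close>.\<close>

definition hess :: "nat \<Rightarrow> nat \<Rightarrow> real" where
  "hess i j = (if i = j then 1 + 2 * (\<Sum>l\<in>{..<N} - {i}. 1 / (r i - r l)\<^sup>2)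
                               + 2 * (\<Sum>l\<in>{..<N} - {i}. 1 / (r i + r l)\<^sup>2)
               else 2 / (r i + r j)\<^sup>2 - 2 / (r i - r j)\<^sup>2)"

definition alpha :: "(nat \<Rightarrow> real) \<Rightarrow> nat \<Rightarrow> nat \<Rightarrow> real" where
  "alpha w i j = (w i - w j) / (r i - r j)"

definition beta :: "(nat \<Rightarrow> real) \<Rightarrow> nat \<Rightarrow> nat \<Rightarrow> real" where
  "beta w i j = (w i + w j) / (r i + r j)"

lemma hess_sym: "hess i j = hess j i"
  unfolding hess_def by (auto simp: power2_commute add.commute)

lemma inner_eq_pair_sum: "(\<Sum>i<N. r i * w i) = 2 * pair_sum N (\<lambda>i j. alpha w i j + beta w i j)"
proof -
  define h where "h i l = w i / (r i - r l) + w i / (r i + r l)" for i l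
  have "(\<Sum>i<N. r i * w i) = (\<Sum>i<N. \<Sum>l\<in>{..<N} - {i}. 2 * h i l)"
  proof (rule sum.cong[OF refl])
    fix i assume "i \<in> {..<N}"
    then show "r i * w i = (\<Sum>l\<in>{..<N} - {i}. 2 * h i l)"
      by (subst critical) (auto simp: h_def sum_distrib_left sum_distrib_right add_divide_distrib algebra_simps)
  qed
  also have "\<dots> = 2 * pair_sum N (\<lambda>i j. h i j + h j i)"
    by (simp add: sum_distrib_left[symmetric] offdiag_sum_eq_pair_sum)
  also have "pair_sum N (\<lambda>i j. h i j + h j i) = pair_sum N (\<lambda>i j. alpha w i j + beta w i j)"
  proof (rule pair_sum_cong)
    fix i j
    have "w j / (r j - r i) = - (w j / (r i - r j))"
      using divide_minus_right[of "w j" "r i - r j"] by simp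
    then show "h i j + h j i = alpha w i j + beta w i j"
      unfolding h_def alpha_def beta_def by (simp add: diff_divide_distrib add_divide_distrib add.commute)
  qed
  finally show ?thesis .
qed

lemma quad_form_hess:
  "quad_form N hess w = (\<Sum>i<N. (w i)\<^sup>2) + 2 * pair_sum N (\<lambda>i j. (alpha w i j)\<^sup>2 + (beta w i j)\<^sup>2)"
proof -
  define a where "a i j = 1 / (r i - r j)\<^sup>2" for i j
  define b where "b i j = 1 / (r i + r j)\<^sup>2" for i j
  define q where "q i j = 2 * (a i j + b i j) * (w i)\<^sup>2 + 2 * (b i j - a i j) * w i * w j" for i j
  have row: "w i * hess i i * w i + (\<Sum>j\<in>{..<N} - {i}. w i * hess i j * w j)
      = (w i)\<^sup>2 + (\<Sum>j\<in>{..<N} - {i}. q i j)" for i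
  proof -
    have "(\<Sum>j\<in>{..<N} - {i}. w i * hess i j * w j) = (\<Sum>j\<in>{..<N} - {i}. 2 * (b i j - a i j) * w i * w j)"
      by (intro sum.cong refl) (auto simp: hess_def a_def b_def diff_divide_distrib)
    moreover have "w i * hess i i * w i = (w i)\<^sup>2 + (\<Sum>j\<in>{..<N} - {i}. 2 * (a i j + b i j) * (w i)\<^sup>2)"
      unfolding hess_def a_def b_def
      by (simp add: sum.distrib sum_distrib_left sum_distrib_right power2_eq_square algebra_simps)
    ultimately show ?thesis
      unfolding q_def by (simp add: sum.distrib)
  qed
  have "quad_form N hess w = (\<Sum>i<N. w i * hess i i * w i + (\<Sum>j\<in>{..<N} - {i}. w i * hess i j * w j))"
    unfolding quad_form_def by (intro sum.cong refl) (rule sum.remove; simp)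
  also have "\<dots> = (\<Sum>i<N. (w i)\<^sup>2) + pair_sum N (\<lambda>i j. q i j + q j i)"
    unfolding row by (simp add: sum.distrib offdiag_sum_eq_pair_sum)
  also have "pair_sum N (\<lambda>i j. q i j + q j i) = pair_sum N (\<lambda>i j. 2 * ((alpha w i j)\<^sup>2 + (beta w i j)\<^sup>2))"
  proof (rule pair_sum_cong)
    fix i j
    have "a j i = a i j" "b j i = b i j"
      unfolding a_def b_def by (simp_all add: power2_commute add.commute)
    moreover have "(alpha w i j)\<^sup>2 = a i j * (w i - w j)\<^sup>2" "(beta w i j)\<^sup>2 = b i j * (w i + w j)\<^sup>2"
      unfolding alpha_def beta_def a_def b_def by (simp_all add: power_divide)
    ultimately show "q i j + q j i = 2 * ((alpha w i j)\<^sup>2 + (beta w i j)\<^sup>2)"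
      unfolding q_def by (simp add: power2_eq_square algebra_simps)
  qed
  finally show ?thesis
    by (simp only: pair_sum_cmult)
qed

lemma sq_norm_le_quad_form_hess: "(\<Sum>i<N. (w i)\<^sup>2) \<le> quad_form N hess w"
proof -
  have "0 \<le> pair_sum N (\<lambda>i j. (alpha w i j)\<^sup>2 + (beta w i j)\<^sup>2)"
    by (intro pair_sum_nonneg) simp
  then show ?thesis
    unfolding quad_form_hess by simp
qed

end

locale laguerre_zeros_D =
  fixes N :: nat and z r :: "nat \<Rightarrow> real"
  assumes zeros: "\<forall>i < N - 1. laguerre (N - 1) 1 (z i) = 0"
    and z_dec: "\<forall>i. Suc i < N - 1 \<longrightarrow> z (Suc i) < z i"
    and z_last_pos: "N \<ge> 2 \<longrightarrow> z (N - 2) > 0"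
    and r_zeros: "\<forall>i < N - 1. r i = sqrt (2 * z i)" and r_last: "r (N - 1) = 0"
begin

lemma z_strict_mono: "i < j \<Longrightarrow> j < N - 1 \<Longrightarrow> z j < z i"
proof (induction j)
  case (Suc j)
  then show ?case
    using z_dec by (cases "i = j") (auto intro: less_trans)
qed simp

lemma z_pos: "i < N - 1 \<Longrightarrow> z i > 0"
proof -
  assume i: "i < N - 1"
  then have "z (N - 2) > 0" "N - 2 < N - 1"
    using z_last_pos by auto
  moreover have "i = N - 2 \<or> i < N - 2"
    using i by auto
  ultimately show ?thesis
    using z_strict_mono[of i "N - 2"] by auto
qed

lemma r_sq: "i < N - 1 \<Longrightarrow> (r i)\<^sup>2 = 2 * z i"
  and r_pos: "i < N - 1 \<Longrightarrow> r i > 0"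
  using r_zeros z_pos[of i] by simp_all

lemma r_strict_mono: "i < j \<Longrightarrow> j < N \<Longrightarrow> r j < r i"
proof (cases "j = N - 1")
  case True
  then show "i < j \<Longrightarrow> r j < r i"
    using r_last r_pos[of i] by simp
next
  case False
  assume "i < j" "j < N"
  with False have "j < N - 1" "i < N - 1"
    by simp_all
  then show ?thesis
    using z_strict_mono[OF \<open>i < j\<close>] r_zeros z_pos by simp
qed

lemma open_chamberD_r: "open_chamberD N r"
  unfolding open_chamberD_def
proof (intro allI impI)
  fix i j assume ij: "i < j" "j < N"
  have "r j \<ge> 0"
  proof (cases "j < N - 1")
    case False
    then have "j = N - 1"
      using ij by simp
    then show ?thesis
      using r_last by simp
  qed (use r_pos in \<open>simp add: less_imp_le\<close>)
  then show "\<bar>r j\<bar> < r i"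
    using r_strict_mono[OF ij] by simp
qed

lemma z_inj: "inj_on z {..<N - 1}"
proof (rule inj_onI)
  fix a b assume "a \<in> {..<N - 1}" "b \<in> {..<N - 1}" "z a = z b"
  then show "a = b"
    using z_strict_mono[of a b] z_strict_mono[of b a] by (cases a b rule: linorder_cases) auto
qed

lemma r_pair_term:
  assumes i: "i < N - 1" and l: "l < N - 1" "l \<noteq> i"
  shows "1 / (r i - r l) + 1 / (r i + r l) = r i * (1 / (z i - z l))"
proof -
  have "i < N" "l < N"
    using i l by simp_all
  then have "r i \<noteq> r l"
    using l(2) r_strict_mono[of i l] r_strict_mono[of l i] by (cases i l rule: linorder_cases) auto
  moreover have "r i + r l \<noteq> 0"
    using r_pos[OF i] r_pos[OF l(1)] by simp
  ultimately have "1 / (r i - r l) + 1 / (r i + r l) = 2 * r i / ((r i - r l) * (r i + r l))"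
    by (simp add: field_simps)
  also have "(r i - r l) * (r i + r l) = 2 * (z i - z l)"
    using r_sq[OF i] r_sq[OF l(1)] by (simp add: power2_eq_square algebra_simps)
  finally show ?thesis
    by (simp only: mult_divide_mult_cancel_left[of 2] times_divide_eq_right mult_1_right)
qed

text \<open>For \<open>i < N - 1\<close> the critical-point sum consists of \<open>2 / r\<^sub>i\<close>, coming from \<open>r\<^sub>N\<^sub>-\<^sub>1 = 0\<close>, and
  the terms of \<open>r_pair_term\<close>, which Stieltjes' relation sums up.\<close>

lemma r_critical: "i < N \<Longrightarrow> r i = 2 * (\<Sum>l\<in>{..<N} - {i}. 1 / (r i - r l) + 1 / (r i + r l))"
proof (cases "i = N - 1")
  case True
  then show ?thesis
    using r_last by (simp add: sum.neutral)
next
  case False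
  assume "i < N"
  with False have i: "i < N - 1"
    by simp
  define n where "n = N - 1"
  have stieltjes: "(\<Sum>l\<in>{..<n} - {i}. 1 / (z i - z l)) = (z i - 2) / (2 * z i)"
    using laguerre_zeros_stieltjes[of z n 1 i] z_inj zeros i z_pos[OF i] by (simp add: n_def)
  have pair: "1 / (r i - r l) + 1 / (r i + r l) = r i * (1 / (z i - z l))" if "l \<in> {..<n} - {i}" for l
    using that i by (intro r_pair_term) (auto simp: n_def)
  have split: "{..<N} - {i} = insert n ({..<n} - {i})"
    using i by (auto simp: n_def)
  have "(\<Sum>l\<in>{..<N} - {i}. 1 / (r i - r l) + 1 / (r i + r l))
      = (1 / (r i - r n) + 1 / (r i + r n)) + (\<Sum>l\<in>{..<n} - {i}. 1 / (r i - r l) + 1 / (r i + r l))"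
    unfolding split by (rule sum.insert) auto
  also have "1 / (r i - r n) + 1 / (r i + r n) = 2 / r i"
    using r_last by (simp add: n_def)
  also have "(\<Sum>l\<in>{..<n} - {i}. 1 / (r i - r l) + 1 / (r i + r l))
      = (\<Sum>l\<in>{..<n} - {i}. r i * (1 / (z i - z l)))"
    using pair by (rule sum.cong[OF refl])
  also have "\<dots> = r i * ((z i - 2) / (2 * z i))"
    unfolding stieltjes[symmetric] by (rule sum_distrib_left[symmetric])
  also have "2 / r i + r i * ((z i - 2) / (2 * z i)) = r i / 2"
  proof -
    have zi: "z i = (r i)\<^sup>2 / 2"
      using r_sq[OF i] by simp
    show ?thesis
      unfolding zi using r_pos[OF i] by (simp add: field_simps power2_eq_square)
  qed
  finally show ?thesis
    by linarith
qed

end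

sublocale laguerre_zeros_D \<subseteq> typeD_mode N r
  by unfold_locales (fact open_chamberD_r, fact r_critical)

section \<open>The density of the type D Bessel process\<close>

lemma chamberD_mono:
  assumes y: "y \<in> chamberD N" and ij: "i \<le> j" "j \<le> N - 2"
  shows "y j \<le> y i"
  using ij
proof (induction j)
  case (Suc j)
  show ?case
  proof (cases "i = Suc j")
    case False
    then have "y j \<le> y i"
      using Suc by simp
    moreover have "y (Suc j) \<le> y j"
      using y Suc.prems unfolding chamberD_def by auto
    ultimately show ?thesis
      by simp
  qed simp
qed simp

lemma chamberD_abs_le:
  assumes y: "y \<in> chamberD N" and ij: "i < j" "j < N"
  shows "\<bar>y j\<bar> \<le> y i"
proof -
  have last: "\<bar>y (N - 1)\<bar> \<le> y (N - 2)"
    using y ij unfolding chamberD_def by auto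
  show ?thesis
  proof (cases "j = N - 1")
    case True
    then have "i \<le> N - 2"
      using ij by simp
    then show ?thesis
      using last chamberD_mono[OF y, of i "N - 2"] True by simp
  next
    case False
    then have "j \<le> N - 2"
      using ij by simp
    then show ?thesis
      using last chamberD_mono[OF y, of j "N - 2"] chamberD_mono[OF y, of i j] ij by simp
  qed
qed

lemma open_chamberD_imp_chamberD:
  assumes "y \<in> PiE {..<N} (\<lambda>_. UNIV)" and "open_chamberD N y"
  shows "y \<in> chamberD N"
proof -
  have "y (Suc i) \<le> y i" if "Suc i < N - 1" for i
  proof -
    have "Suc i < N"
      using that by simp
    then show ?thesis
      using open_chamberD_pos[OF assms(2), of i "Suc i"] by simp
  qed
  moreover have "\<bar>y (N - 1)\<bar> \<le> y (N - 2)" if "2 \<le> N"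
  proof -
    have "N - 2 < N - 1" "N - 1 < N"
      using that by simp_all
    then show ?thesis
      using assms(2) unfolding open_chamberD_def by (blast intro: less_imp_le)
  qed
  ultimately show ?thesis
    unfolding chamberD_def using assms(1) by auto
qed

definition log_besselD_dens :: "nat \<Rightarrow> real \<Rightarrow> real \<Rightarrow> (nat \<Rightarrow> real) \<Rightarrow> real" where
  "log_besselD_dens N k t y =
     - (\<Sum>i<N. (y i)\<^sup>2) / (2 * t) + 2 * k * pair_sum N (\<lambda>i j. ln (y i - y j) + ln (y i + y j))"

lemma besselD_dens_nonneg: "0 \<le> besselD_dens N k t y"
  unfolding besselD_dens_def by (intro mult_nonneg_nonneg prod_nonneg) auto

lemma besselD_dens_eq_exp:
  assumes "y \<in> PiE {..<N} (\<lambda>_. UNIV)" and y: "open_chamberD N y"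
  shows "besselD_dens N k t y = exp (log_besselD_dens N k t y)"
proof -
  have "((y i)\<^sup>2 - (y j)\<^sup>2) powr (2 * k) = exp (2 * k * (ln (y i - y j) + ln (y i + y j)))"
    if "i < j" "j < N" for i j
  proof -
    have pos: "0 < y i - y j" "0 < y i + y j"
      using open_chamberD_pos[OF y that] by auto
    moreover have "(y i)\<^sup>2 - (y j)\<^sup>2 = (y i - y j) * (y i + y j)"
      by (simp add: power2_eq_square algebra_simps)
    ultimately show ?thesis
      by (simp add: powr_def ln_mult mult_ac)
  qed
  then have "(\<Prod>i<N. \<Prod>j\<in>{i<..<N}. ((y i)\<^sup>2 - (y j)\<^sup>2) powr (2 * k))
      = exp (2 * k * pair_sum N (\<lambda>i j. ln (y i - y j) + ln (y i + y j)))"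
    unfolding pair_sum_def by (simp add: exp_sum sum_distrib_left)
  then show ?thesis
    unfolding besselD_dens_def log_besselD_dens_def
    using open_chamberD_imp_chamberD[OF assms] by (simp add: exp_add[symmetric])
qed

lemma besselD_dens_eq_0:
  assumes k: "k > 0" and y: "\<not> open_chamberD N y"
  shows "besselD_dens N k t y = 0"
proof (cases "y \<in> chamberD N")
  case True
  from y obtain i j where ij: "i < j" "j < N" and "\<not> \<bar>y j\<bar> < y i"
    unfolding open_chamberD_def by blast
  then have "\<bar>y j\<bar> = y i"
    using chamberD_abs_le[OF True ij] by simp
  then have "(y i)\<^sup>2 - (y j)\<^sup>2 = 0"
    by (metis power2_abs right_minus_eq)
  then have "(\<Prod>j\<in>{i<..<N}. ((y i)\<^sup>2 - (y j)\<^sup>2) powr (2 * k)) = 0"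
    using ij by (intro prod_zero) auto
  then have "(\<Prod>i<N. \<Prod>j\<in>{i<..<N}. ((y i)\<^sup>2 - (y j)\<^sup>2) powr (2 * k)) = 0"
    using ij by (intro prod_zero) auto
  then show ?thesis
    unfolding besselD_dens_def by simp
qed (simp add: besselD_dens_def)

lemma chamberD_sets: "chamberD N \<in> sets (RN N)"
proof -
  have component: "(\<lambda>x. x i) \<in> borel_measurable (RN N)" if "i < N" for i
    using that unfolding RN_def by simp
  have chain: "Measurable.pred (RN N) (\<lambda>x. Suc i < N - 1 \<longrightarrow> x (Suc i) \<le> x i)" for i
  proof (cases "Suc i < N - 1")
    case True
    then have "Measurable.pred (RN N) (\<lambda>x. x (Suc i) \<le> x i)"
      unfolding pred_def by (intro borel_measurable_le component) simp_all
    then show ?thesis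
      using True by simp
  qed simp
  have last: "Measurable.pred (RN N) (\<lambda>x. 2 \<le> N \<longrightarrow> \<bar>x (N - 1)\<bar> \<le> x (N - 2))"
  proof (cases "2 \<le> N")
    case True
    then have "Measurable.pred (RN N) (\<lambda>x. \<bar>x (N - 1)\<bar> \<le> x (N - 2))"
      unfolding pred_def by (intro borel_measurable_le borel_measurable_abs component) simp_all
    then show ?thesis
      using True by simp
  qed simp
  have "chamberD N = {x \<in> space (RN N). (\<forall>i. Suc i < N - 1 \<longrightarrow> x (Suc i) \<le> x i)
                                  \<and> (2 \<le> N \<longrightarrow> \<bar>x (N - 1)\<bar> \<le> x (N - 2))}"
    unfolding chamberD_def RN_def by (simp only: space_PiM space_lborel space_borel)
  then show ?thesis
    by (simp only:) (intro predE pred_intros_logic(3) pred_intros_countable(1) chain last)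
qed

lemma besselD_dens_measurable [measurable]: "besselD_dens N k t \<in> borel_measurable (RN N)"
proof -
  have "(\<lambda>y. \<Prod>i<N. \<Prod>j\<in>{i<..<N}. ((y i)\<^sup>2 - (y j)\<^sup>2) powr (2 * k)) \<in> borel_measurable (RN N)"
    unfolding RN_def
  proof (intro borel_measurable_prod)
    fix i j assume "i \<in> {..<N}" "j \<in> {i<..<N}"
    then have [measurable]: "(\<lambda>y. y i) \<in> borel_measurable (PiM {..<N} (\<lambda>_. lborel :: real measure))"
      "(\<lambda>y. y j) \<in> borel_measurable (PiM {..<N} (\<lambda>_. lborel :: real measure))"
      by simp_all
    show "(\<lambda>y. ((y i)\<^sup>2 - (y j)\<^sup>2) powr (2 * k)) \<in> borel_measurable (PiM {..<N} (\<lambda>_. lborel))"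
      by measurable
  qed
  moreover have "(\<lambda>y. exp (- (\<Sum>i<N. (y i)\<^sup>2) / (2 * t))) \<in> borel_measurable (RN N)"
    unfolding RN_def by measurable
  ultimately show ?thesis
    unfolding besselD_dens_def
    by (intro borel_measurable_times borel_measurable_indicator chamberD_sets)
qed

lemma distr_PiM_lborel_translate:
  fixes c :: "nat \<Rightarrow> real" and I :: "nat set"
  assumes I: "finite I"
  shows "distr (PiM I (\<lambda>_. lborel)) (PiM I (\<lambda>_. lborel)) (\<lambda>w. \<lambda>i\<in>I. w i + c i) = PiM I (\<lambda>_. lborel)"
proof (rule product_sigma_finite.PiM_eqI[OF product_sigma_finite_lborel I])
  fix A :: "nat \<Rightarrow> real set" assume A: "\<And>i. i \<in> I \<Longrightarrow> A i \<in> sets lborel"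
  have translate: "(\<lambda>w. \<lambda>i\<in>I. w i + c i) \<in> PiM I (\<lambda>_. lborel) \<rightarrow>\<^sub>M PiM I (\<lambda>_. lborel)"
    by (intro measurable_restrict) (simp add: measurable_cong_sets[OF refl sets_lborel])
  have A': "{x. x + c i \<in> A i} \<in> sets lborel" if "i \<in> I" for i
    using measurable_sets[of "\<lambda>x. x + c i" borel borel "A i"] A[OF that] by (simp add: vimage_def)
  have "(\<lambda>w. \<lambda>i\<in>I. w i + c i) -` PiE I A \<inter> space (PiM I (\<lambda>_. lborel)) = PiE I (\<lambda>i. {x. x + c i \<in> A i})"
    by (auto simp: space_PiM PiE_iff)
  then have "emeasure (distr (PiM I (\<lambda>_. lborel)) (PiM I (\<lambda>_. lborel)) (\<lambda>w. \<lambda>i\<in>I. w i + c i)) (PiE I A)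
      = emeasure (PiM I (\<lambda>_. lborel)) (PiE I (\<lambda>i. {x. x + c i \<in> A i}))"
    using A by (subst emeasure_distr[OF translate]) (auto intro!: sets_PiM_I_finite I)
  also have "\<dots> = (\<Prod>i\<in>I. emeasure lborel {x. x + c i \<in> A i})"
    using A' by (intro product_sigma_finite.emeasure_PiM[OF product_sigma_finite_lborel I])
  also have "\<dots> = (\<Prod>i\<in>I. emeasure lborel (A i))"
  proof (rule prod.cong[OF refl])
    fix i assume "i \<in> I"
    have "emeasure lborel (A i) = emeasure (distr lborel borel ((+) (c i))) (A i)"
      by (simp add: lborel_distr_plus)
    also have "\<dots> = emeasure lborel {x. x + c i \<in> A i}"
      using A[OF \<open>i \<in> I\<close>] by (simp add: emeasure_distr vimage_def add.commute)
    finally show "emeasure lborel {x. x + c i \<in> A i} = emeasure lborel (A i)" ..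
  qed
  finally show "emeasure (distr (PiM I (\<lambda>_. lborel)) (PiM I (\<lambda>_. lborel)) (\<lambda>w. \<lambda>i\<in>I. w i + c i)) (PiE I A)
      = (\<Prod>i\<in>I. emeasure lborel (A i))" .
qed simp

section \<open>Laplace asymptotics of the centered laws\<close>

definition ln_rem :: "real \<Rightarrow> real" where
  "ln_rem x = ln (1 + x) - x"

lemma ln_rem_nonpos: "x > -1 \<Longrightarrow> ln_rem x \<le> 0"
  unfolding ln_rem_def using ln_le_minus_one[of "1 + x"] by simp

lemma tendsto_ln_rem_div_sq: "((\<lambda>x. ln_rem x / x\<^sup>2) \<longlongrightarrow> - 1 / 2) (at 0)"
  unfolding ln_rem_def
proof (rule lhopital[where f' = "\<lambda>x. 1 / (1 + x) - 1" and g' = "\<lambda>x. 2 * x"])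
  have near0: "eventually (\<lambda>x::real. x \<noteq> 0 \<and> x > -1) (at 0)"
  proof -
    have "eventually (\<lambda>x::real. x \<in> {-1<..<1}) (at 0)"
      by (intro eventually_at_in_open') auto
    then show ?thesis
      using eventually_neq_at_within[of 0 0] by eventually_elim auto
  qed
  have "((\<lambda>x::real. ln (1 + x) - x) \<longlongrightarrow> ln (1 + 0) - 0) (at 0)"
    by (intro tendsto_intros) auto
  then show "((\<lambda>x::real. ln (1 + x) - x) \<longlongrightarrow> 0) (at 0)"
    by simp
  have "((\<lambda>x::real. x\<^sup>2) \<longlongrightarrow> 0\<^sup>2) (at 0)"
    by (intro tendsto_intros)
  then show "((\<lambda>x::real. x\<^sup>2) \<longlongrightarrow> 0) (at 0)"
    by simp
  show "eventually (\<lambda>x::real. x\<^sup>2 \<noteq> 0) (at 0)" "eventually (\<lambda>x::real. 2 * x \<noteq> 0) (at 0)"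
    using near0 by (auto elim: eventually_mono)
  show "eventually (\<lambda>x::real. DERIV (\<lambda>x. ln (1 + x) - x) x :> 1 / (1 + x) - 1) (at 0)"
    using near0 by eventually_elim (auto intro!: derivative_eq_intros)
  show "eventually (\<lambda>x::real. DERIV (\<lambda>x. x\<^sup>2) x :> 2 * x) (at 0)"
    by (intro always_eventually allI) (auto intro!: derivative_eq_intros)
  have "((\<lambda>x::real. - 1 / (2 * (1 + x))) \<longlongrightarrow> - 1 / (2 * (1 + 0))) (at 0)"
    by (intro tendsto_intros) auto
  then have "((\<lambda>x::real. - 1 / (2 * (1 + x))) \<longlongrightarrow> - 1 / 2) (at 0)"
    by simp
  moreover have "eventually (\<lambda>x::real. - 1 / (2 * (1 + x)) = (1 / (1 + x) - 1) / (2 * x)) (at 0)"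
    using near0
  proof eventually_elim
    case (elim x)
    moreover have "x * 2 + x * (x * 2) = 2 * x * (1 + x)"
      by (simp add: algebra_simps)
    ultimately have "x * 2 + x * (x * 2) \<noteq> 0"
      by simp
    with elim show ?case
      by (simp add: field_simps)
  qed
  ultimately show "((\<lambda>x::real. (1 / (1 + x) - 1) / (2 * x)) \<longlongrightarrow> - 1 / 2) (at 0)"
    by (rule Lim_transform_eventually)
qed

lemma filterlim_sqrt_mult_at_top:
  assumes "t > 0"
  shows "filterlim (\<lambda>k. sqrt (k * t)) at_top at_top"
  using filterlim_compose[OF sqrt_at_top filterlim_at_top_mult_tendsto_pos[OF tendsto_const assms filterlim_ident]]
  by (simp add: mult.commute)

lemma tendsto_mult_ln_rem:
  fixes a t :: real
  assumes t: "t > 0"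
  shows "((\<lambda>k. 2 * k * ln_rem (a / sqrt (k * t))) \<longlongrightarrow> - a\<^sup>2 / t) at_top"
proof (cases "a = 0")
  case False
  define x where "x k = a / sqrt (k * t)" for k
  have "(x \<longlongrightarrow> 0) at_top"
    unfolding x_def
    by (rule tendsto_divide_0[OF tendsto_const filterlim_at_top_imp_at_infinity[OF filterlim_sqrt_mult_at_top[OF t]]])
  moreover have "eventually (\<lambda>k. x k \<noteq> 0) at_top"
    using eventually_gt_at_top[of 0] by eventually_elim (use False t in \<open>simp add: x_def\<close>)
  ultimately have "filterlim x (at 0) at_top"
    by (rule filterlim_atI)
  from tendsto_mult_left[OF filterlim_compose[OF tendsto_ln_rem_div_sq this], of "2 * a\<^sup>2 / t"]
  have "((\<lambda>k. 2 * a\<^sup>2 / t * (ln_rem (x k) / (x k)\<^sup>2)) \<longlongrightarrow> - a\<^sup>2 / t) at_top"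
    by simp
  moreover have "eventually (\<lambda>k. 2 * a\<^sup>2 / t * (ln_rem (x k) / (x k)\<^sup>2) = 2 * k * ln_rem (x k)) at_top"
    using eventually_gt_at_top[of 0]
  proof eventually_elim
    case (elim k)
    then have "a\<^sup>2 = k * t * (x k)\<^sup>2" "x k \<noteq> 0"
      using t False by (simp_all add: x_def power_divide)
    then show ?case
      using elim t by (simp add: field_simps)
  qed
  ultimately show ?thesis
    unfolding x_def by (rule Lim_transform_eventually)
qed (simp add: ln_rem_def)

locale typeD_CLT = typeD_mode +
  fixes t :: real
  assumes t_pos: "0 < t"
begin

definition mode :: "real \<Rightarrow> nat \<Rightarrow> real" where
  "mode k = (\<lambda>i\<in>{..<N}. sqrt (k * t) * r i)"

definition shift :: "real \<Rightarrow> (nat \<Rightarrow> real) \<Rightarrow> nat \<Rightarrow> real" where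
  "shift k w = (\<lambda>i\<in>{..<N}. w i + sqrt (k * t) * r i)"

definition center :: "real \<Rightarrow> (nat \<Rightarrow> real) \<Rightarrow> nat \<Rightarrow> real" where
  "center k y = (\<lambda>i\<in>{..<N}. y i - sqrt (k * t) * r i)"

definition dens_ratio :: "real \<Rightarrow> (nat \<Rightarrow> real) \<Rightarrow> real" where
  "dens_ratio k w = besselD_dens N k t (shift k w) / besselD_dens N k t (mode k)"

lemma shift_diff_eq:
  assumes "k > 0" "i < j" "j < N"
  shows "shift k w i - shift k w j = (mode k i - mode k j) * (1 + alpha w i j / sqrt (k * t))"
    and "shift k w i + shift k w j = (mode k i + mode k j) * (1 + beta w i j / sqrt (k * t))"
proof -
  have factor: "a * (1 + x / a) = a + x" if "a \<noteq> 0" for a x :: real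
    using that by (simp add: field_simps)
  have md: "mode k i - mode k j = sqrt (k * t) * (r i - r j)" "mode k i + mode k j = sqrt (k * t) * (r i + r j)"
    using assms by (simp_all add: mode_def algebra_simps)
  have "sqrt (k * t) \<noteq> 0" "r i - r j \<noteq> 0" "r i + r j \<noteq> 0"
    using assms t_pos r_diff_pos[of i j] r_add_pos[of i j] by auto
  then have "mode k i - mode k j \<noteq> 0" "mode k i + mode k j \<noteq> 0"
    unfolding md by simp_all
  moreover have "alpha w i j / sqrt (k * t) = (w i - w j) / (mode k i - mode k j)"
    and "beta w i j / sqrt (k * t) = (w i + w j) / (mode k i + mode k j)"
    unfolding md alpha_def beta_def by (simp_all add: mult.commute)
  ultimately show "shift k w i - shift k w j = (mode k i - mode k j) * (1 + alpha w i j / sqrt (k * t))"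
    and "shift k w i + shift k w j = (mode k i + mode k j) * (1 + beta w i j / sqrt (k * t))"
    using assms by (simp_all add: factor shift_def mode_def)
qed

lemma mode_pos:
  assumes "k > 0" "i < j" "j < N"
  shows "0 < mode k i - mode k j" "0 < mode k i + mode k j"
proof -
  have "sqrt (k * t) > 0"
    using assms t_pos by simp
  then show "0 < mode k i - mode k j" "0 < mode k i + mode k j"
    using assms r_diff_pos[of i j] r_add_pos[of i j] unfolding mode_def
    by (simp_all add: right_diff_distrib[symmetric] distrib_left[symmetric])
qed

lemma open_chamberD_shift_iff:
  assumes "k > 0"
  shows "open_chamberD N (shift k w) \<longleftrightarrow>
           (\<forall>i j. i < j \<longrightarrow> j < N \<longrightarrow> - 1 < alpha w i j / sqrt (k * t) \<and> - 1 < beta w i j / sqrt (k * t))"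
proof -
  have "0 < 1 + x \<longleftrightarrow> - 1 < x" for x :: real
    by linarith
  then show ?thesis
    unfolding open_chamberD_iff using shift_diff_eq[OF assms] mode_pos[OF assms]
    by (simp add: zero_less_mult_iff) (meson order.asym)
qed

lemma besselD_dens_mode_pos: "k > 0 \<Longrightarrow> 0 < besselD_dens N k t (mode k)"
  using besselD_dens_eq_exp[of "mode k"] open_chamberD_shift_iff[of k "\<lambda>_. 0"]
  by (simp add: mode_def shift_def alpha_def beta_def)

lemma ln_pair_shift:
  assumes k: "k > 0" and y: "open_chamberD N (shift k w)" and ij: "i < j" "j < N"
  shows "(ln (shift k w i - shift k w j) + ln (shift k w i + shift k w j))
           - (ln (mode k i - mode k j) + ln (mode k i + mode k j))
         = (ln_rem (alpha w i j / sqrt (k * t)) + ln_rem (beta w i j / sqrt (k * t)))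
           + (alpha w i j + beta w i j) / sqrt (k * t)"
proof -
  have "0 < 1 + alpha w i j / sqrt (k * t)" "0 < 1 + beta w i j / sqrt (k * t)"
    using y ij unfolding open_chamberD_shift_iff[OF k] by force+
  then show ?thesis
    unfolding shift_diff_eq[OF k ij] ln_rem_def
    using mode_pos[OF k ij] by (simp add: ln_mult add_divide_distrib)
qed

text \<open>The first-order terms of the expansion cancel by \<open>inner_eq_pair_sum\<close>, that is, because
  \<open>\<surd>(k t) r\<close> is a critical point of the log-density.\<close>

lemma log_besselD_dens_shift:
  assumes k: "k > 0" and y: "open_chamberD N (shift k w)"
  shows "log_besselD_dens N k t (shift k w) - log_besselD_dens N k t (mode k)
           = - (\<Sum>i<N. (w i)\<^sup>2) / (2 * t)
             + 2 * k * pair_sum N (\<lambda>i j. ln_rem (alpha w i j / sqrt (k * t)) + ln_rem (beta w i j / sqrt (k * t)))"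
proof -
  define s where "s = sqrt (k * t)"
  have s: "s > 0" "s\<^sup>2 = k * t"
    using k t_pos by (simp_all add: s_def)
  have pair: "(ln (shift k w i - shift k w j) + ln (shift k w i + shift k w j))
        - (ln (mode k i - mode k j) + ln (mode k i + mode k j))
      = (ln_rem (alpha w i j / s) + ln_rem (beta w i j / s)) + (alpha w i j + beta w i j) / s"
    if "i < j" "j < N" for i j
    unfolding s_def using k y that by (rule ln_pair_shift)
  have sq: "(\<Sum>i<N. (shift k w i)\<^sup>2) - (\<Sum>i<N. (mode k i)\<^sup>2) = (\<Sum>i<N. (w i)\<^sup>2) + 2 * s * (\<Sum>i<N. r i * w i)"
    unfolding sum_subtractf[symmetric] sum_distrib_left sum.distrib[symmetric]
    by (intro sum.cong refl) (simp add: shift_def mode_def s_def power2_eq_square algebra_simps)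
  have "pair_sum N (\<lambda>i j. (ln (shift k w i - shift k w j) + ln (shift k w i + shift k w j))
                           - (ln (mode k i - mode k j) + ln (mode k i + mode k j)))
      = pair_sum N (\<lambda>i j. (ln_rem (alpha w i j / s) + ln_rem (beta w i j / s)) + (alpha w i j + beta w i j) / s)"
    by (rule pair_sum_cong) (rule pair)
  also have "\<dots> = pair_sum N (\<lambda>i j. ln_rem (alpha w i j / s) + ln_rem (beta w i j / s))
                   + pair_sum N (\<lambda>i j. alpha w i j + beta w i j) / s"
    by (simp only: pair_sum_add pair_sum_divide)
  finally have pairs: "pair_sum N (\<lambda>i j. (ln (shift k w i - shift k w j) + ln (shift k w i + shift k w j))
                           - (ln (mode k i - mode k j) + ln (mode k i + mode k j)))
      = pair_sum N (\<lambda>i j. ln_rem (alpha w i j / s) + ln_rem (beta w i j / s)) + (\<Sum>i<N. r i * w i) / (2 * s)"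
    unfolding inner_eq_pair_sum by simp
  have "log_besselD_dens N k t (shift k w) - log_besselD_dens N k t (mode k)
      = - ((\<Sum>i<N. (shift k w i)\<^sup>2) - (\<Sum>i<N. (mode k i)\<^sup>2)) / (2 * t)
        + 2 * k * pair_sum N (\<lambda>i j. (ln (shift k w i - shift k w j) + ln (shift k w i + shift k w j))
                                     - (ln (mode k i - mode k j) + ln (mode k i + mode k j)))"
    unfolding log_besselD_dens_def pair_sum_def sum_subtractf by (simp add: algebra_simps diff_divide_distrib)
  also have "\<dots> = - ((\<Sum>i<N. (w i)\<^sup>2) + 2 * s * (\<Sum>i<N. r i * w i)) / (2 * t)
        + 2 * k * (pair_sum N (\<lambda>i j. ln_rem (alpha w i j / s) + ln_rem (beta w i j / s))
                   + (\<Sum>i<N. r i * w i) / (2 * s))"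
    unfolding sq pairs ..
  also have "\<dots> = - (\<Sum>i<N. (w i)\<^sup>2) / (2 * t)
        + 2 * k * pair_sum N (\<lambda>i j. ln_rem (alpha w i j / s) + ln_rem (beta w i j / s))
        + (k / s - s / t) * (\<Sum>i<N. r i * w i)"
    using s t_pos by (simp add: field_simps)
  also have "k / s - s / t = 0"
    using s t_pos by (simp add: field_simps power2_eq_square)
  finally show ?thesis
    by (simp add: s_def)
qed

lemma dens_ratio_eq:
  assumes "k > 0" and "open_chamberD N (shift k w)"
  shows "dens_ratio k w = exp (- (\<Sum>i<N. (w i)\<^sup>2) / (2 * t)
           + 2 * k * pair_sum N (\<lambda>i j. ln_rem (alpha w i j / sqrt (k * t)) + ln_rem (beta w i j / sqrt (k * t))))"
proof -
  have "open_chamberD N (mode k)"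
    using open_chamberD_shift_iff[OF assms(1), of "\<lambda>_. 0"] by (simp add: mode_def shift_def alpha_def beta_def)
  then show ?thesis
    unfolding dens_ratio_def log_besselD_dens_shift[OF assms, symmetric]
    using assms by (simp add: besselD_dens_eq_exp shift_def mode_def exp_diff)
qed

lemma dens_ratio_bounds:
  assumes k: "k > 0"
  shows "0 \<le> dens_ratio k w" "dens_ratio k w \<le> exp (- (\<Sum>i<N. (w i)\<^sup>2) / (2 * t))"
proof -
  show "0 \<le> dens_ratio k w"
    unfolding dens_ratio_def by (simp add: besselD_dens_nonneg)
  show "dens_ratio k w \<le> exp (- (\<Sum>i<N. (w i)\<^sup>2) / (2 * t))"
  proof (cases "open_chamberD N (shift k w)")
    case True
    then have "pair_sum N (\<lambda>i j. ln_rem (alpha w i j / sqrt (k * t)) + ln_rem (beta w i j / sqrt (k * t))) \<le> 0"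
      unfolding open_chamberD_shift_iff[OF k] by (intro pair_sum_nonpos add_nonpos_nonpos ln_rem_nonpos) auto
    then show ?thesis
      unfolding dens_ratio_eq[OF k True] using k by (simp add: mult_nonneg_nonpos)
  qed (simp add: dens_ratio_def besselD_dens_eq_0[OF k])
qed

lemma eventually_open_chamberD_shift: "eventually (\<lambda>k. k > 0 \<and> open_chamberD N (shift k w)) at_top"
proof -
  have small: "eventually (\<lambda>k. - 1 < c / sqrt (k * t)) at_top" for c
  proof -
    have "((\<lambda>k. c / sqrt (k * t)) \<longlongrightarrow> 0) at_top"
      by (rule tendsto_divide_0[OF tendsto_const filterlim_at_top_imp_at_infinity[OF filterlim_sqrt_mult_at_top[OF t_pos]]])
    then show ?thesis
      by (rule order_tendstoD) simp
  qed
  have "eventually (\<lambda>k. \<forall>p\<in>{..<N} \<times> {..<N}. - 1 < alpha w (fst p) (snd p) / sqrt (k * t)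
                                            \<and> - 1 < beta w (fst p) (snd p) / sqrt (k * t)) at_top"
    by (intro eventually_ball_finite ballI eventually_conj small) simp
  with eventually_gt_at_top[of 0] show ?thesis
  proof eventually_elim
    case (elim k)
    then show ?case
      unfolding open_chamberD_shift_iff[OF elim(1)] by (auto dest: bspec[where x = "(_, _)"])
  qed
qed

lemma tendsto_dens_ratio: "((\<lambda>k. dens_ratio k w) \<longlongrightarrow> exp (- quad_form N hess w / (2 * t))) at_top"
proof -
  define F where "F k = exp (- (\<Sum>i<N. (w i)\<^sup>2) / (2 * t) + pair_sum N (\<lambda>i j.
      2 * k * ln_rem (alpha w i j / sqrt (k * t)) + 2 * k * ln_rem (beta w i j / sqrt (k * t))))" for k
  have "(F \<longlongrightarrow> exp (- (\<Sum>i<N. (w i)\<^sup>2) / (2 * t)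
                     + pair_sum N (\<lambda>i j. - (alpha w i j)\<^sup>2 / t + - (beta w i j)\<^sup>2 / t))) at_top"
    unfolding F_def by (intro tendsto_exp tendsto_add tendsto_const tendsto_pair_sum tendsto_mult_ln_rem t_pos)
  also have "- (\<Sum>i<N. (w i)\<^sup>2) / (2 * t) + pair_sum N (\<lambda>i j. - (alpha w i j)\<^sup>2 / t + - (beta w i j)\<^sup>2 / t)
      = - quad_form N hess w / (2 * t)"
  proof -
    have "pair_sum N (\<lambda>i j. - (alpha w i j)\<^sup>2 / t + - (beta w i j)\<^sup>2 / t)
        = - pair_sum N (\<lambda>i j. (alpha w i j)\<^sup>2 + (beta w i j)\<^sup>2) / t"
      using pair_sum_divide[of N "\<lambda>i j. (alpha w i j)\<^sup>2 + (beta w i j)\<^sup>2" t]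
        pair_sum_cmult[of N "- 1" "\<lambda>i j. ((alpha w i j)\<^sup>2 + (beta w i j)\<^sup>2) / t"]
      by (simp add: add_divide_distrib)
    then show ?thesis
      unfolding quad_form_hess using t_pos by (simp add: field_simps)
  qed
  finally have "(F \<longlongrightarrow> exp (- quad_form N hess w / (2 * t))) at_top" .
  moreover have "eventually (\<lambda>k. F k = dens_ratio k w) at_top"
    using eventually_open_chamberD_shift[of w]
    by eventually_elim (simp add: dens_ratio_eq F_def pair_sum_cmult[symmetric] algebra_simps)
  ultimately show ?thesis
    by (rule Lim_transform_eventually)
qed

lemma shift_measurable: "shift k \<in> RN N \<rightarrow>\<^sub>M RN N"
  and center_measurable: "center k \<in> RN N \<rightarrow>\<^sub>M RN N"
  unfolding shift_def center_def RN_def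
  by (intro measurable_restrict; simp add: measurable_cong_sets[OF refl sets_lborel])+

lemma integral_shift:
  fixes h :: "(nat \<Rightarrow> real) \<Rightarrow> real"
  assumes "h \<in> borel_measurable (RN N)"
  shows "(\<integral>y. h y \<partial>RN N) = (\<integral>w. h (shift k w) \<partial>RN N)"
proof -
  have "distr (RN N) (RN N) (shift k) = RN N"
    unfolding shift_def RN_def by (rule distr_PiM_lborel_translate) simp
  moreover have "(\<integral>y. h y \<partial>distr (RN N) (RN N) (shift k)) = (\<integral>w. h (shift k w) \<partial>RN N)"
    using shift_measurable assms by (rule integral_distr)
  ultimately show ?thesis
    by simp
qed

lemma center_shift: "w \<in> space (RN N) \<Longrightarrow> center k (shift k w) = w"
  unfolding center_def shift_def RN_def by (auto simp: space_PiM PiE_iff extensional_def)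

lemma dens_ratio_measurable [measurable]: "dens_ratio k \<in> borel_measurable (RN N)"
  unfolding dens_ratio_def
  using measurable_comp[OF shift_measurable besselD_dens_measurable] by (simp add: comp_def)

lemma integral_centered_law:
  fixes f :: "(nat \<Rightarrow> real) \<Rightarrow> real"
  assumes k: "k > 0" and f: "f \<in> borel_measurable (RN N)"
  shows "(\<integral>x. f x \<partial>distr (besselD_law N k t) (RN N) (center k))
           = (\<integral>w. dens_ratio k w * f w \<partial>RN N) / (\<integral>w. dens_ratio k w \<partial>RN N)"
proof -
  define Z where "Z = (\<integral>x. besselD_dens N k t x \<partial>RN N)"
  define D where "D = besselD_dens N k t (mode k)"
  have D: "D > 0"
    unfolding D_def by (rule besselD_dens_mode_pos[OF k])
  have law: "besselD_law N k t = density (RN N) (\<lambda>y. ennreal (besselD_dens N k t y / Z))"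
    unfolding besselD_law_def Z_def ..
  have center: "center k \<in> besselD_law N k t \<rightarrow>\<^sub>M RN N"
    using center_measurable unfolding law by (simp add: measurable_cong_sets[OF sets_density refl])
  have fc: "(\<lambda>y. f (center k y)) \<in> borel_measurable (RN N)"
    using measurable_comp[OF center_measurable f] by (simp add: comp_def)
  have "(\<integral>x. f x \<partial>distr (besselD_law N k t) (RN N) (center k)) = (\<integral>y. f (center k y) \<partial>besselD_law N k t)"
    by (rule integral_distr[OF center f])
  also have "\<dots> = (\<integral>y. besselD_dens N k t y / Z * f (center k y) \<partial>RN N)"
    unfolding law using fc
    by (subst integral_density) (auto simp: besselD_dens_nonneg Z_def integral_nonneg_AE)
  also have "\<dots> = (\<integral>y. besselD_dens N k t y * f (center k y) \<partial>RN N) / Z"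
    by simp
  also have "(\<integral>y. besselD_dens N k t y * f (center k y) \<partial>RN N) = (\<integral>w. D * (dens_ratio k w * f w) \<partial>RN N)"
    using D borel_measurable_times[OF besselD_dens_measurable fc]
    by (subst integral_shift[of _ k]) (auto intro!: Bochner_Integration.integral_cong
        simp: center_shift dens_ratio_def D_def)
  also have "Z = (\<integral>w. D * dens_ratio k w \<partial>RN N)"
    unfolding Z_def using D by (subst integral_shift[of _ k]) (auto simp: dens_ratio_def D_def)
  finally show ?thesis
    using D by simp
qed

definition gauss :: "(nat \<Rightarrow> real) \<Rightarrow> real" where
  "gauss w = exp (- quad_form N hess w / (2 * t))"

lemma gauss_measurable [measurable]: "gauss \<in> borel_measurable (RN N)"
  unfolding gauss_def RN_def by measurable

lemma tendsto_integral_dens_ratio: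
  fixes f :: "(nat \<Rightarrow> real) \<Rightarrow> real"
  assumes f: "f \<in> borel_measurable (RN N)" and bounded: "\<And>x. x \<in> space (RN N) \<Longrightarrow> \<bar>f x\<bar> \<le> B"
  shows "((\<lambda>k. \<integral>w. dens_ratio k w * f w \<partial>RN N) \<longlongrightarrow> (\<integral>w. gauss w * f w \<partial>RN N)) at_top"
proof (rule integral_dominated_convergence_at_top[where w = "\<lambda>w. \<bar>B\<bar> * exp (- (1 / t) * (\<Sum>i<N. (w i)\<^sup>2) / 2)"])
  show "integrable (RN N) (\<lambda>w. \<bar>B\<bar> * exp (- (1 / t) * (\<Sum>i<N. (w i)\<^sup>2) / 2))"
    unfolding RN_def using t_pos by (intro integrable_mult_right integrable_exp_sq_norm) simp
  show "AE w in RN N. ((\<lambda>k. dens_ratio k w * f w) \<longlongrightarrow> gauss w * f w) at_top"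
    unfolding gauss_def by (intro AE_I2 tendsto_mult_right tendsto_dens_ratio)
  show "\<forall>\<^sub>F k in at_top. AE w in RN N. norm (dens_ratio k w * f w) \<le> \<bar>B\<bar> * exp (- (1 / t) * (\<Sum>i<N. (w i)\<^sup>2) / 2)"
    using eventually_gt_at_top[of 0]
  proof eventually_elim
    case (elim k)
    have "\<bar>dens_ratio k w * f w\<bar> \<le> exp (- (\<Sum>i<N. (w i)\<^sup>2) / (2 * t)) * \<bar>B\<bar>" if "w \<in> space (RN N)" for w
      unfolding abs_mult using dens_ratio_bounds[OF elim, of w] bounded[OF that]
      by (intro mult_mono) auto
    then show ?case
      by (intro AE_I2) (simp add: field_simps)
  qed
qed (use f in measurable)

lemma gauss_pos: "0 < gauss w"
  unfolding gauss_def by simp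

lemma gauss_char_integral:
  "\<exists>C>0. \<forall>v. (\<integral>w. cis (\<Sum>i<N. mat_vec N (\<lambda>i j. hess i j / t) v i * w i) * complex_of_real (gauss w) \<partial>RN N)
                 = complex_of_real (C * exp (- quad_form N (\<lambda>i j. hess i j / t) v / 2))"
proof -
  have gauss_eq: "gauss w = exp (- quad_form N (\<lambda>i j. hess i j / t) w / 2)" for w
    unfolding gauss_def quad_form_divide by (simp add: field_simps)
  have "\<exists>C>0. \<forall>v. (\<integral>w. gaussian_integrand N (\<lambda>i j. hess i j / t) v w \<partial>PiM {..<N} (\<lambda>_. lborel))
                 = complex_of_real (C * exp (- quad_form N (\<lambda>i j. hess i j / t) v / 2))"
  proof (rule gaussian_char_integral)
    show "1 / t * (\<Sum>i<N. (w i)\<^sup>2) \<le> quad_form N (\<lambda>i j. hess i j / t) w" for w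
      unfolding quad_form_divide using sq_norm_le_quad_form_hess[of w] t_pos by (simp add: divide_right_mono)
  qed (use t_pos hess_sym in simp_all)
  then show ?thesis
    unfolding gaussian_integrand_def gauss_eq RN_def .
qed

lemma gauss_integral_pos: "0 < (\<integral>w. gauss w \<partial>RN N)"
proof -
  obtain C where "C > 0" and char: "\<And>v. (\<integral>w. cis (\<Sum>i<N. mat_vec N (\<lambda>i j. hess i j / t) v i * w i)
                                         * complex_of_real (gauss w) \<partial>RN N)
                                    = complex_of_real (C * exp (- quad_form N (\<lambda>i j. hess i j / t) v / 2))"
    using gauss_char_integral by blast
  have "complex_of_real (\<integral>w. gauss w \<partial>RN N) = complex_of_real C"
    using char[of "\<lambda>_. 0"] by (simp add: mat_vec_def quad_form_def)
  with \<open>C > 0\<close> show ?thesis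
    by simp
qed

definition limit_law :: "(nat \<Rightarrow> real) measure" where
  "limit_law = density (RN N) (\<lambda>w. ennreal (gauss w / (\<integral>w. gauss w \<partial>RN N)))"

lemma tendsto_integral_centered_law:
  fixes f :: "(nat \<Rightarrow> real) \<Rightarrow> real"
  assumes f: "f \<in> borel_measurable (RN N)" and bounded: "\<And>x. x \<in> space (RN N) \<Longrightarrow> \<bar>f x\<bar> \<le> B"
  shows "((\<lambda>k. \<integral>x. f x \<partial>distr (besselD_law N k t) (RN N) (center k)) \<longlongrightarrow> (\<integral>x. f x \<partial>limit_law)) at_top"
proof -
  have "((\<lambda>k. (\<integral>w. dens_ratio k w * f w \<partial>RN N) / (\<integral>w. dens_ratio k w * 1 \<partial>RN N))
          \<longlongrightarrow> (\<integral>w. gauss w * f w \<partial>RN N) / (\<integral>w. gauss w * 1 \<partial>RN N)) at_top"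
    using gauss_integral_pos
    by (intro tendsto_divide tendsto_integral_dens_ratio[OF f bounded] tendsto_integral_dens_ratio[where B = 1]) auto
  moreover have "eventually (\<lambda>k. (\<integral>w. dens_ratio k w * f w \<partial>RN N) / (\<integral>w. dens_ratio k w * 1 \<partial>RN N)
      = (\<integral>x. f x \<partial>distr (besselD_law N k t) (RN N) (center k))) at_top"
    using eventually_gt_at_top[of 0] by eventually_elim (simp add: integral_centered_law[OF _ f])
  moreover have "(\<integral>x. f x \<partial>limit_law) = (\<integral>w. gauss w * f w \<partial>RN N) / (\<integral>w. gauss w * 1 \<partial>RN N)"
    unfolding limit_law_def using f gauss_integral_pos
    by (subst integral_density) (auto simp: gauss_pos less_imp_le)
  ultimately show ?thesis
    by (auto intro: Lim_transform_eventually)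
qed

lemma prob_space_limit_law: "prob_space limit_law"
proof -
  have "integrable (RN N) gauss"
    using gauss_integral_pos not_integrable_integral_eq by fastforce
  then have "emeasure limit_law (space limit_law) = ennreal (\<integral>w. gauss w / (\<integral>w. gauss w \<partial>RN N) \<partial>RN N)"
    unfolding limit_law_def using gauss_integral_pos gauss_pos
    by (simp add: emeasure_density nn_integral_eq_integral less_imp_le)
  also have "(\<integral>w. gauss w / (\<integral>w. gauss w \<partial>RN N) \<partial>RN N) = 1"
    using gauss_integral_pos by simp
  finally show ?thesis
    by (intro prob_spaceI) simp
qed

lemma conv_distr_centered_law: "conv_distr N (\<lambda>k. distr (besselD_law N k t) (RN N) (center k)) limit_law at_top"
  unfolding conv_distr_def
proof (intro allI impI)
  fix f :: "(nat \<Rightarrow> real) \<Rightarrow> real"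
  assume f: "f \<in> borel_measurable (RN N)" and "\<exists>B. \<forall>x\<in>PiE {..<N} (\<lambda>_. UNIV). \<bar>f x\<bar> \<le> B"
  then obtain B where "\<And>x. x \<in> space (RN N) \<Longrightarrow> \<bar>f x\<bar> \<le> B"
    by (auto simp: RN_def space_PiM)
  with f show "((\<lambda>k. \<integral>x. f x \<partial>distr (besselD_law N k t) (RN N) (center k)) \<longlongrightarrow> (\<integral>x. f x \<partial>limit_law)) at_top"
    by (rule tendsto_integral_centered_law)
qed

lemma limit_law_centered_normal:
  assumes inv: "is_inverse_mat N hess \<Sigma>"
  shows "is_centered_normal N (\<lambda>i j. t * \<Sigma> i j) limit_law"
  unfolding is_centered_normal_def
proof (intro conjI allI)
  obtain C where C: "C > 0" and char: "\<And>v. (\<integral>w. cis (\<Sum>i<N. mat_vec N (\<lambda>i j. hess i j / t) v i * w i)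
                                         * complex_of_real (gauss w) \<partial>RN N)
                                    = complex_of_real (C * exp (- quad_form N (\<lambda>i j. hess i j / t) v / 2))"
    using gauss_char_integral by blast
  have mass: "(\<integral>w. gauss w \<partial>RN N) = C"
    using char[of "\<lambda>_. 0"] by (simp add: mat_vec_def quad_form_def)
  show "prob_space limit_law"
    by (rule prob_space_limit_law)
  show "sets limit_law = sets (RN N)"
    unfolding limit_law_def by simp
  fix u :: "nat \<Rightarrow> real"
  \<comment> \<open>The frequency \<open>u\<close> is \<open>(hess / t) v\<close> for \<open>v = t \<Sigma> u\<close>.\<close>
  define v where "v i = t * (\<Sum>j<N. \<Sigma> i j * u j)" for i
  have mat_vec_v: "mat_vec N (\<lambda>i j. hess i j / t) v i = u i" if "i < N" for i
    unfolding v_def using inv t_pos that by (intro mat_vec_scaled_inverse) simp_all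
  have "quad_form N (\<lambda>i j. hess i j / t) v = (\<Sum>i<N. v i * u i)"
    unfolding quad_form_eq_mat_vec by (simp add: mat_vec_v)
  also have "\<dots> = (\<Sum>i<N. \<Sum>j<N. u i * (t * \<Sigma> i j) * u j)"
    unfolding v_def by (simp add: sum_distrib_left sum_distrib_right mult_ac)
  finally have quad: "quad_form N (\<lambda>i j. hess i j / t) v = (\<Sum>i<N. \<Sum>j<N. u i * (t * \<Sigma> i j) * u j)" .
  have "(\<integral>x. cis (\<Sum>i<N. u i * x i) \<partial>limit_law)
      = (\<integral>w. complex_of_real (1 / C) * (cis (\<Sum>i<N. mat_vec N (\<lambda>i j. hess i j / t) v i * w i)
                                          * complex_of_real (gauss w)) \<partial>RN N)"
    unfolding limit_law_def mass using C
    by (subst integral_density) (auto intro!: Bochner_Integration.integral_cong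
        simp: RN_def gauss_def mat_vec_v scaleR_conv_of_real)
  also have "\<dots> = complex_of_real (exp (- (\<Sum>i<N. \<Sum>j<N. u i * (t * \<Sigma> i j) * u j) / 2))"
    unfolding integral_mult_right_zero char quad using C by simp
  finally show "(\<integral>x. cis (\<Sum>i<N. u i * x i) \<partial>limit_law)
      = complex_of_real (exp (- (\<Sum>i<N. \<Sum>j<N. u i * (t * \<Sigma> i j) * u j) / 2))" .
qed

end

theorem theorem5p2:
  fixes N :: nat and z r :: "nat \<Rightarrow> real" and S :: "nat \<Rightarrow> nat \<Rightarrow> real" and t :: real
  assumes N: "N \<ge> 1"
    and z_roots: "\<forall>i < N - 1. laguerre (N - 1) 1 (z i) = 0"
    and z_all: "\<forall>x. laguerre (N - 1) 1 x = 0 \<longrightarrow> (\<exists>i < N - 1. x = z i)"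
    and z_dec: "\<forall>i. Suc i < N - 1 \<longrightarrow> z (Suc i) < z i"
    and z_pos: "N \<ge> 2 \<longrightarrow> z (N - 2) > 0"
    and r_def: "\<forall>i < N - 1. r i = sqrt (2 * z i)" "r (N - 1) = 0"
    and S_diag: "\<forall>i < N. S i i = 1 + 2 * (\<Sum>l\<in>{..<N} - {i}. 1 / (r i - r l)\<^sup>2)
                                    + 2 * (\<Sum>l\<in>{..<N} - {i}. 1 / (r i + r l)\<^sup>2)"
    and S_off: "\<forall>i < N. \<forall>j < N. i \<noteq> j \<longrightarrow> S i j = 2 / (r i + r j)\<^sup>2 - 2 / (r i - r j)\<^sup>2"
    and t: "t > 0"
  shows "\<exists>\<Sigma>. is_inverse_mat N S \<Sigma> \<and>
           (\<exists>\<nu>. is_centered_normal N (\<lambda>i j. t * \<Sigma> i j) \<nu> \<and>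
                conv_distr N
                  (\<lambda>k. distr (besselD_law N k t) (RN N)
                         (\<lambda>y. \<lambda>i\<in>{..<N}. y i - sqrt (k * t) * r i))
                  \<nu> at_top)"
proof -
  interpret laguerre_zeros_D N z r
    using z_roots z_dec z_pos r_def by unfold_locales
  interpret typeD_CLT N r t
    using t by unfold_locales
  obtain \<Sigma> where inv: "is_inverse_mat N hess \<Sigma>"
    using ex_inverse_mat_if_coercive[of 1 N hess] sq_norm_le_quad_form_hess by auto
  have "hess i j = S i j" if "i < N" "j < N" for i j
    using S_diag S_off that unfolding hess_def by auto
  with inv have "is_inverse_mat N S \<Sigma>"
    by (rule is_inverse_mat_cong)
  moreover have "(\<lambda>y. \<lambda>i\<in>{..<N}. y i - sqrt (k * t) * r i) = center k" for k
    by (simp add: center_def fun_eq_iff)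
  ultimately show ?thesis
    using limit_law_centered_normal[OF inv] conv_distr_centered_law by auto
qed

end
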